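(* Let $(K,W)$ be either $(K^+_{m,n},W^+_{m,n})$ or $(K_{m,n},W_{m,n})$, let $P$ be a simple $K$-module and $\lambda\in\mathbb{C}^n$. Then $\sigma_\lambda:F(P,M(\lambda))\to F(P,M(\lambda))$ is a homomorphism of $W$-modules.
   Context: All vector spaces are over $\mathbb{C}$; modules are $\mathbb{Z}_2$-graded, simple means no graded submodules other than $0$ and itself. Fix $m,n\in\mathbb{Z}_{\ge0}$, not both zero. $A^+_{m,n}=\mathbb{C}[t_1,\dots,t_m]\otimes\Lambda(\xi_1,\dots,\xi_n)$, $A_{m,n}=\mathbb{C}[t_1^{\pm1},\dots,t_m^{\pm1}]\otimes\Lambda(\xi_1,\dots,\xi_n)$ ($t_i$ even, $\xi_j$ odd). $W^+_{m,n}$ (resp. $W_{m,n}$) is the Lie superalgebra of super-derivations of $A^+_{m,n}$ (resp. $A_{m,n}$); $K^+_{m,n}$ (resp. $K_{m,n}$) is the super Weyl algebra of operators on $A^+_{m,n}$ (resp. $A_{m,n}$) generated by multiplication by $t_i$ (resp. $t_i^{\pm1}$), $\xi_j$ and by $\partial_{t_i}=\partial/\partial t_i$, $\partial_{\xi_j}=\partial/\partial\xi_j$. $\mathfrak{gl}(m,n)$ has matrix units $E_{a,b}$, even part $\mathfrak{gl}(m,n)_0=\mathfrak{gl}_m\oplus\mathfrak{gl}_n$ ($\mathfrak{gl}_m=\mathrm{span}\{E_{i,k}:i,k\le m\}$, $\mathfrak{gl}_n\cong\mathrm{span}\{E_{m+l,m+j}\}$ via $E_{l,j}\mapsto E_{m+l,m+j}$),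 odd part spanned by $E_{i,m+j},E_{m+j,i}$. There is a Lie superalgebra homomorphism $\pi:W\to K\otimes U(\mathfrak{gl}(m,n))$ with $\pi(t^\alpha\xi_I\partial_{t_i})=t^\alpha\xi_I\partial_{t_i}\otimes1+\sum_{s=1}^m\partial_{t_s}(t^\alpha\xi_I)\otimes E_{s,i}+(-1)^{|I|-1}\sum_{l=1}^n\partial_{\xi_l}(t^\alpha\xi_I)\otimes E_{m+l,i}$, $\pi(t^\alpha\xi_I\partial_{\xi_j})=t^\alpha\xi_I\partial_{\xi_j}\otimes1+\sum_{s=1}^m\partial_{t_s}(t^\alpha\xi_I)\otimes E_{s,m+j}+(-1)^{|I|-1}\sum_{l=1}^n\partial_{\xi_l}(t^\alpha\xi_I)\otimes E_{m+l,m+j}$ (here $t^\alpha$ with $\alpha\in\mathbb{Z}_{\ge0}^m$ resp. $\mathbb{Z}^m$, $\xi_I$ the increasing product over $I\subset\{1,\dots,n\}$, and derivatives of $t^\alpha\xi_I$ are multiplication operators), and for a $K$-module $P$ and a $\mathfrak{gl}(m,n)$-module $M$, $F(P,M)=P\otimes M$ is a $W$-module via $x\cdot(u\otimes v)=\pi(x)(u\otimes v)$, $(a\otimes b)(u\otimes v)=(-1)^{|b||u|}au\otimes bv$. For $\lambda\in\mathbb{C}^n$: $e_1,\dots,e_n$ standard basis of $\mathbb{Z}^n$, $|\mu|=\sum_j\mu_j$; $S(\lambda)=X_1\times\dots\times X_n$ with $X_j=\lambda_j+\mathbb{Z}$ if $\lambda_j\notin\mathbb{Z}$, $X_j=\mathbb{Z}_{\ge0}$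 if $\lambda_j\in\mathbb{Z}_{\ge0}$, $X_j=\{-1,-2,\dots\}$ if $\lambda_j\in\{-1,-2,\dots\}$; $W(\lambda)$ has basis $\{y(\lambda'):\lambda'\in S(\lambda)\}$, $y(\mu)=0$ for $\mu\notin S(\lambda)$, $\mathfrak{gl}_n$ acting by $E_{l,j}y(\lambda')=\lambda'_jy(\lambda'-e_j+e_l)$. $V(r)=\Lambda^r(\mathbb{C}^m)$ with natural $\mathfrak{gl}_m$-action ($e_1,\dots,e_m$ standard basis of $\mathbb{C}^m$). $M(\lambda)=\bigoplus_{r=0}^mV(r)\otimes W(\lambda)$, spanned by $e_{i_1}\wedge\dots\wedge e_{i_r}y(\lambda')$, with parity $|\lambda-\lambda'|\bmod2$; it is a $\mathfrak{gl}(m,n)$-module with $\mathfrak{gl}(m,n)_0$ acting by tensor product and $E_{i,m+j}\cdot e_{i_1}\wedge\dots\wedge e_{i_r}y(\lambda')=(-1)^r\lambda'_je_i\wedge e_{i_1}\wedge\dots\wedge e_{i_r}y(\lambda'-e_j)$, $E_{m+j,i}\cdot e_{i_1}\wedge\dots\wedge e_{i_r}y(\lambda')=0$ if $i\notin\{i_1,\dots,i_r\}$ and $=(-1)^{r-s}e_{i_1}\wedge\dots\wedge\widehat{e_{i_s}}\wedge\dots\wedge e_{i_r}y(\lambda'+e_j)$ if $i=i_s$. Operators on $M(\lambda)$: $e_i\wedge(e_{i_1}\wedge\dots\wedge e_{i_r}y(\lambda'))=e_i\wedge e_{i_1}\wedge\dots\wedge e_{i_r}y(\lambda')$, $\tau_j(e_{i_1}\wedge\dots\wedge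 e_{i_r}y(\lambda'))=(-1)^re_{i_1}\wedge\dots\wedge e_{i_r}y(\lambda'+e_j)$. $\sigma_\lambda(u\otimes v)=\sum_{s=1}^m\partial_{t_s}u\otimes e_s\wedge v+(-1)^{|u|-1}\sum_{l=1}^n\partial_{\xi_l}u\otimes\tau_l(v)$ for $u\in P$, $v\in M(\lambda)$. *)

theory Defs
  imports Complex_Main
begin

(* Indices: even variables t_i, i in {1..m}; odd variables xi_j, j in {1..n}.
   The flag L selects the case: L = False is (K^+_{m,n}, W^+_{m,n}),
   L = True is (K_{m,n}, W_{m,n}) (Laurent polynomials).
   =================================================================== *)

(* A Z_2-graded K-module P: a complex vector space on the type 'p
   (scalar multiplication smul), a parity involution gam (even part =
   +1 eigenspace, odd part = -1 eigenspace), and the action of the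
   generators of the super Weyl algebra K:
     Tm i = t_i,  Ti i = t_i^{-1} (only used when L),  Dt i = d/dt_i,
     Xi j = xi_j,  Dx j = d/dxi_j. *)
record 'p Kmod =
  smul :: "complex \<Rightarrow> 'p \<Rightarrow> 'p"
  gam  :: "'p \<Rightarrow> 'p"
  Tm   :: "nat \<Rightarrow> 'p \<Rightarrow> 'p"
  Ti   :: "nat \<Rightarrow> 'p \<Rightarrow> 'p"
  Dt   :: "nat \<Rightarrow> 'p \<Rightarrow> 'p"
  Xi   :: "nat \<Rightarrow> 'p \<Rightarrow> 'p"
  Dx   :: "nat \<Rightarrow> 'p \<Rightarrow> 'p"

definition Pev :: "('p::ab_group_add) Kmod \<Rightarrow> 'p set" where
  "Pev P = {u. gam P u = u}"

definition Pod :: "('p::ab_group_add) Kmod \<Rightarrow> 'p set" where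
  "Pod P = {u. gam P u = - u}"

definition evp :: "('p::ab_group_add) Kmod \<Rightarrow> 'p \<Rightarrow> 'p" where
  "evp P u = smul P (1/2) (u + gam P u)"

definition odp :: "('p::ab_group_add) Kmod \<Rightarrow> 'p \<Rightarrow> 'p" where
  "odp P u = smul P (1/2) (u - gam P u)"

definition lin :: "('p::ab_group_add) Kmod \<Rightarrow> ('p \<Rightarrow> 'p) \<Rightarrow> bool" where
  "lin P f = Vector_Spaces.linear (smul P) (smul P) f"

definition is_Kmod :: "bool \<Rightarrow> nat \<Rightarrow> nat \<Rightarrow> ('p::ab_group_add) Kmod \<Rightarrow> bool" where
  "is_Kmod L m n P \<longleftrightarrow>
     vector_space (smul P) \<and>
     lin P (gam P) \<and> (\<forall>u. gam P (gam P u) = u) \<and>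
     (\<forall>i\<in>{1..m}. lin P (Tm P i) \<and> lin P (Dt P i) \<and> (L \<longrightarrow> lin P (Ti P i))) \<and>
     (\<forall>j\<in>{1..n}. lin P (Xi P j) \<and> lin P (Dx P j)) \<and>
     (\<forall>i\<in>{1..m}. \<forall>u. gam P (Tm P i u) = Tm P i (gam P u) \<and>
                         gam P (Dt P i u) = Dt P i (gam P u) \<and>
                         (L \<longrightarrow> gam P (Ti P i u) = Ti P i (gam P u))) \<and>
     (\<forall>j\<in>{1..n}. \<forall>u. gam P (Xi P j u) = - Xi P j (gam P u) \<and>
                         gam P (Dx P j u) = - Dx P j (gam P u)) \<and>
     (\<forall>i\<in>{1..m}. \<forall>k\<in>{1..m}. \<forall>u.
         Tm P i (Tm P k u) = Tm P k (Tm P i u) \<and>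
         Dt P i (Dt P k u) = Dt P k (Dt P i u) \<and>
         Dt P i (Tm P k u) - Tm P k (Dt P i u) = (if i = k then u else 0)) \<and>
     (\<forall>j\<in>{1..n}. \<forall>l\<in>{1..n}. \<forall>u.
         Xi P j (Xi P l u) = - Xi P l (Xi P j u) \<and>
         Dx P j (Dx P l u) = - Dx P l (Dx P j u) \<and>
         Dx P j (Xi P l u) + Xi P l (Dx P j u) = (if j = l then u else 0)) \<and>
     (\<forall>i\<in>{1..m}. \<forall>j\<in>{1..n}. \<forall>u.
         Tm P i (Xi P j u) = Xi P j (Tm P i u) \<and>
         Tm P i (Dx P j u) = Dx P j (Tm P i u) \<and>
         Dt P i (Xi P j u) = Xi P j (Dt P i u) \<and>
         Dt P i (Dx P j u) = Dx P j (Dt P i u)) \<and>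
     (L \<longrightarrow> (\<forall>i\<in>{1..m}. \<forall>u. Ti P i (Tm P i u) = u \<and> Tm P i (Ti P i u) = u))"

definition graded_Ksub :: "bool \<Rightarrow> nat \<Rightarrow> nat \<Rightarrow> ('p::ab_group_add) Kmod \<Rightarrow> 'p set \<Rightarrow> bool" where
  "graded_Ksub L m n P N \<longleftrightarrow>
     module.subspace (smul P) N \<and>
     (\<forall>u\<in>N. \<exists>a b. a \<in> N \<inter> Pev P \<and> b \<in> N \<inter> Pod P \<and> u = a + b) \<and>
     (\<forall>i\<in>{1..m}. \<forall>u\<in>N. Tm P i u \<in> N \<and> Dt P i u \<in> N \<and> (L \<longrightarrow> Ti P i u \<in> N)) \<and>
     (\<forall>j\<in>{1..n}. \<forall>u\<in>N. Xi P j u \<in> N \<and> Dx P j u \<in> N)"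

definition simple_Kmod :: "bool \<Rightarrow> nat \<Rightarrow> nat \<Rightarrow> ('p::ab_group_add) Kmod \<Rightarrow> bool" where
  "simple_Kmod L m n P \<longleftrightarrow> is_Kmod L m n P \<and> (\<exists>u::'p. u \<noteq> 0) \<and>
     (\<forall>N. graded_Ksub L m n P N \<longrightarrow> N = {0} \<or> N = UNIV)"

(* multiplication by t^alpha (alpha_i < 0 only occurs when L) *)
definition tpow :: "('p::ab_group_add) Kmod \<Rightarrow> nat \<Rightarrow> (nat \<Rightarrow> int) \<Rightarrow> 'p \<Rightarrow> 'p" where
  "tpow P m \<alpha> = foldr (\<lambda>i f. (if \<alpha> i \<ge> 0 then Tm P i ^^ nat (\<alpha> i) else Ti P i ^^ nat (- \<alpha> i)) \<circ> f)
                       [1..<m+1] id"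

definition xiprod :: "('p::ab_group_add) Kmod \<Rightarrow> nat set \<Rightarrow> 'p \<Rightarrow> 'p" where
  "xiprod P I = foldr (\<lambda>j f. Xi P j \<circ> f) (sorted_list_of_set I) id"

definition mulop :: "('p::ab_group_add) Kmod \<Rightarrow> nat \<Rightarrow> (nat \<Rightarrow> int) \<Rightarrow> nat set \<Rightarrow> 'p \<Rightarrow> 'p" where
  "mulop P m \<alpha> I = tpow P m \<alpha> \<circ> xiprod P I"

(* multiplication by d/dt_s (t^alpha xi_I) = alpha_s t^(alpha - e_s) xi_I *)
definition dt_coef :: "('p::ab_group_add) Kmod \<Rightarrow> nat \<Rightarrow> (nat \<Rightarrow> int) \<Rightarrow> nat set \<Rightarrow> nat \<Rightarrow> 'p \<Rightarrow> 'p" where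
  "dt_coef P m \<alpha> I s u = smul P (of_int (\<alpha> s)) (mulop P m (\<alpha>(s := \<alpha> s - 1)) I u)"

(* multiplication by d/dxi_l (t^alpha xi_I) *)
definition dxi_coef :: "('p::ab_group_add) Kmod \<Rightarrow> nat \<Rightarrow> (nat \<Rightarrow> int) \<Rightarrow> nat set \<Rightarrow> nat \<Rightarrow> 'p \<Rightarrow> 'p" where
  "dxi_coef P m \<alpha> I l u =
     (if l \<in> I then smul P ((-1) ^ card {k\<in>I. k < l}) (mulop P m \<alpha> (I - {l}) u) else 0)"

(* S(lambda), lambda in C^n given by its values at 1..n *)
definition Sset :: "nat \<Rightarrow> (nat \<Rightarrow> complex) \<Rightarrow> (nat \<Rightarrow> complex) set" where
  "Sset n lam = {\<mu>. (\<forall>j\<in>{1..n}.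
        (lam j \<notin> \<int> \<longrightarrow> \<mu> j - lam j \<in> \<int>) \<and>
        (lam j \<in> \<int> \<and> 0 \<le> Re (lam j) \<longrightarrow> \<mu> j \<in> \<int> \<and> 0 \<le> Re (\<mu> j)) \<and>
        (lam j \<in> \<int> \<and> Re (lam j) < 0 \<longrightarrow> \<mu> j \<in> \<int> \<and> Re (\<mu> j) < 0)) \<and>
      (\<forall>j. j \<notin> {1..n} \<longrightarrow> \<mu> j = 0)}"

(* basis of M(lambda): (S, mu) stands for e_{i_1} /\ ... /\ e_{i_r} y(mu),
   S = {i_1 < ... < i_r} \<subseteq> {1..m}, mu \<in> S(lambda) *)
type_synonym bidx = "nat set \<times> (nat \<Rightarrow> complex)"

definition Bidx :: "nat \<Rightarrow> nat \<Rightarrow> (nat \<Rightarrow> complex) \<Rightarrow> bidx set" where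
  "Bidx m n lam = {(S, \<mu>). S \<subseteq> {1..m} \<and> \<mu> \<in> Sset n lam}"

definition parM :: "nat \<Rightarrow> (nat \<Rightarrow> complex) \<Rightarrow> bidx \<Rightarrow> nat" where
  "parM n lam b = nat (\<lfloor>Re (\<Sum>j\<in>{1..n}. lam j - snd b j)\<rfloor> mod 2)"

(* a coefficient times y(mu), with y(mu) = 0 for mu \<notin> S(lambda) *)
definition yv :: "nat \<Rightarrow> (nat \<Rightarrow> complex) \<Rightarrow> complex \<Rightarrow> nat set \<Rightarrow> (nat \<Rightarrow> complex) \<Rightarrow> complex \<times> bidx" where
  "yv n lam c S \<mu> = (if \<mu> \<in> Sset n lam then (c, (S, \<mu>)) else (0, (S, \<mu>)))"

(* Each operator below maps a basis vector b to c * b' ; result (c, b'). *)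

(* E_{i,k} (i,k \<le> m): natural action of gl_m on \<Lambda>^r(C^m) *)
definition Egl_m :: "nat \<Rightarrow> nat \<Rightarrow> bidx \<Rightarrow> complex \<times> bidx" where
  "Egl_m i k b = (case b of (S, \<mu>) \<Rightarrow>
     if k \<notin> S then (0, b)
     else if i = k then (1, b)
     else if i \<in> S then (0, b)
     else ((-1) ^ card {s\<in>S. min i k < s \<and> s < max i k}, (insert i (S - {k}), \<mu>)))"

(* E_{m+l,m+j}: E_{l,j} y(mu) = mu_j y(mu - e_j + e_l) *)
definition Egl_n :: "nat \<Rightarrow> (nat \<Rightarrow> complex) \<Rightarrow> nat \<Rightarrow> nat \<Rightarrow> bidx \<Rightarrow> complex \<times> bidx" where
  "Egl_n n lam l j b = (case b of (S, \<mu>) \<Rightarrow>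
     (let \<mu>' = \<mu>(j := \<mu> j - 1) in yv n lam (\<mu> j) S (\<mu>'(l := \<mu>' l + 1))))"

(* e_i /\ (e_{i_1} /\ ... /\ e_{i_r}) rewritten in increasing order *)
definition wedge_op :: "nat \<Rightarrow> bidx \<Rightarrow> complex \<times> bidx" where
  "wedge_op i b = (case b of (S, \<mu>) \<Rightarrow>
     if i \<in> S then (0, b) else ((-1) ^ card {k\<in>S. k < i}, (insert i S, \<mu>)))"

(* E_{i,m+j} *)
definition Eup :: "nat \<Rightarrow> (nat \<Rightarrow> complex) \<Rightarrow> nat \<Rightarrow> nat \<Rightarrow> bidx \<Rightarrow> complex \<times> bidx" where
  "Eup n lam i j b = (case b of (S, \<mu>) \<Rightarrow>
     (case wedge_op i (S, \<mu>) of (c, (S', _)) \<Rightarrow>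
        yv n lam ((-1) ^ card S * \<mu> j * c) S' (\<mu>(j := \<mu> j - 1))))"

(* E_{m+j,i} *)
definition Edown :: "nat \<Rightarrow> (nat \<Rightarrow> complex) \<Rightarrow> nat \<Rightarrow> nat \<Rightarrow> bidx \<Rightarrow> complex \<times> bidx" where
  "Edown n lam j i b = (case b of (S, \<mu>) \<Rightarrow>
     if i \<notin> S then (0, b)
     else yv n lam ((-1) ^ (card S - card {k\<in>S. k \<le> i})) (S - {i}) (\<mu>(j := \<mu> j + 1)))"

definition tau_op :: "nat \<Rightarrow> (nat \<Rightarrow> complex) \<Rightarrow> nat \<Rightarrow> bidx \<Rightarrow> complex \<times> bidx" where
  "tau_op n lam j b = (case b of (S, \<mu>) \<Rightarrow> yv n lam ((-1) ^ card S) S (\<mu>(j := \<mu> j + 1)))"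

(* ---------- F(P, M(lambda)) = P \<otimes> M(lambda) ----------
   An element is represented by its coordinates w : bidx \<Rightarrow> 'p, meaning
   sum_b w(b) \<otimes> b, with finite support inside the basis. *)
definition Fsp :: "nat \<Rightarrow> nat \<Rightarrow> (nat \<Rightarrow> complex) \<Rightarrow> ('p::ab_group_add) Kmod \<Rightarrow> (bidx \<Rightarrow> 'p) set" where
  "Fsp m n lam P = {w. finite {b. w b \<noteq> 0} \<and> (\<forall>b. w b \<noteq> 0 \<longrightarrow> b \<in> Bidx m n lam)}"

definition sgl :: "bidx \<Rightarrow> 'p \<Rightarrow> bidx \<Rightarrow> ('p::ab_group_add)" where
  "sgl b u = (\<lambda>b'. if b' = b then u else 0)"

(* (a \<otimes> E)(u \<otimes> b) = (-1)^{|E||u|} a u \<otimes> E b, for a given as operator A,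
   E b = c b' given as cb, and oddE the parity of E; u split into
   homogeneous components *)
definition tens :: "('p::ab_group_add) Kmod \<Rightarrow> ('p \<Rightarrow> 'p) \<Rightarrow> complex \<times> bidx \<Rightarrow> bool \<Rightarrow> 'p \<Rightarrow> bidx \<Rightarrow> 'p" where
  "tens P A cb oddE u = (case cb of (c, b') \<Rightarrow>
      (\<lambda>x. sgl b' (smul P c (A (evp P u))) x +
           sgl b' (smul P (c * (if oddE then -1 else 1)) (A (odp P u))) x))"

(* pi(t^alpha xi_I d/dt_i) acting on u \<otimes> b *)
definition actWt_pure :: "nat \<Rightarrow> nat \<Rightarrow> (nat \<Rightarrow> complex) \<Rightarrow> ('p::ab_group_add) Kmod \<Rightarrow>
     (nat \<Rightarrow> int) \<Rightarrow> nat set \<Rightarrow> nat \<Rightarrow> 'p \<Rightarrow> bidx \<Rightarrow> bidx \<Rightarrow> 'p" where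
  "actWt_pure m n lam P \<alpha> I i u b = (\<lambda>x.
      tens P (mulop P m \<alpha> I \<circ> Dt P i) (1, b) False u x
    + (\<Sum>s\<in>{1..m}. tens P (dt_coef P m \<alpha> I s) (Egl_m s i b) False u x)
    + smul P ((-1) powi (int (card I) - 1))
        (\<Sum>l\<in>{1..n}. tens P (dxi_coef P m \<alpha> I l) (Edown n lam l i b) True u x))"

(* pi(t^alpha xi_I d/dxi_j) acting on u \<otimes> b *)
definition actWx_pure :: "nat \<Rightarrow> nat \<Rightarrow> (nat \<Rightarrow> complex) \<Rightarrow> ('p::ab_group_add) Kmod \<Rightarrow>
     (nat \<Rightarrow> int) \<Rightarrow> nat set \<Rightarrow> nat \<Rightarrow> 'p \<Rightarrow> bidx \<Rightarrow> bidx \<Rightarrow> 'p" where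
  "actWx_pure m n lam P \<alpha> I j u b = (\<lambda>x.
      tens P (mulop P m \<alpha> I \<circ> Dx P j) (1, b) False u x
    + (\<Sum>s\<in>{1..m}. tens P (dt_coef P m \<alpha> I s) (Eup n lam s j b) True u x)
    + smul P ((-1) powi (int (card I) - 1))
        (\<Sum>l\<in>{1..n}. tens P (dxi_coef P m \<alpha> I l) (Egl_n n lam l j b) False u x))"

definition actWt :: "nat \<Rightarrow> nat \<Rightarrow> (nat \<Rightarrow> complex) \<Rightarrow> ('p::ab_group_add) Kmod \<Rightarrow>
     (nat \<Rightarrow> int) \<Rightarrow> nat set \<Rightarrow> nat \<Rightarrow> (bidx \<Rightarrow> 'p) \<Rightarrow> bidx \<Rightarrow> 'p" where
  "actWt m n lam P \<alpha> I i w = (\<lambda>x. \<Sum>b\<in>{b. w b \<noteq> 0}. actWt_pure m n lam P \<alpha> I i (w b) b x)"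

definition actWx :: "nat \<Rightarrow> nat \<Rightarrow> (nat \<Rightarrow> complex) \<Rightarrow> ('p::ab_group_add) Kmod \<Rightarrow>
     (nat \<Rightarrow> int) \<Rightarrow> nat set \<Rightarrow> nat \<Rightarrow> (bidx \<Rightarrow> 'p) \<Rightarrow> bidx \<Rightarrow> 'p" where
  "actWx m n lam P \<alpha> I j w = (\<lambda>x. \<Sum>b\<in>{b. w b \<noteq> 0}. actWx_pure m n lam P \<alpha> I j (w b) b x)"

(* sigma_lambda(u \<otimes> b) = sum_s d_{t_s} u \<otimes> e_s /\ b
      + (-1)^{|u|-1} sum_l d_{xi_l} u \<otimes> tau_l b,
   with u split into homogeneous components *)
definition sigma_pure :: "nat \<Rightarrow> nat \<Rightarrow> (nat \<Rightarrow> complex) \<Rightarrow> ('p::ab_group_add) Kmod \<Rightarrow>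
     'p \<Rightarrow> bidx \<Rightarrow> bidx \<Rightarrow> 'p" where
  "sigma_pure m n lam P u b = (\<lambda>x.
      (\<Sum>s\<in>{1..m}. tens P (Dt P s) (wedge_op s b) False u x)
    + (\<Sum>l\<in>{1..n}. (case tau_op n lam l b of (c, b') \<Rightarrow>
          sgl b' (smul P c (smul P ((-1) powi (0 - 1)) (Dx P l (evp P u)))) x
        + sgl b' (smul P c (smul P ((-1) powi (1 - 1)) (Dx P l (odp P u)))) x)))"

definition sigmaF :: "nat \<Rightarrow> nat \<Rightarrow> (nat \<Rightarrow> complex) \<Rightarrow> ('p::ab_group_add) Kmod \<Rightarrow>
     (bidx \<Rightarrow> 'p) \<Rightarrow> bidx \<Rightarrow> 'p" where
  "sigmaF m n lam P w = (\<lambda>x. \<Sum>b\<in>{b. w b \<noteq> 0}. sigma_pure m n lam P (w b) b x)"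

(* parity operator of F: +1 on even, -1 on odd elements; |u \<otimes> b| = |u| + |b| *)
definition GammaF :: "nat \<Rightarrow> (nat \<Rightarrow> complex) \<Rightarrow> ('p::ab_group_add) Kmod \<Rightarrow>
     (bidx \<Rightarrow> 'p) \<Rightarrow> bidx \<Rightarrow> 'p" where
  "GammaF n lam P w = (\<lambda>b. smul P ((-1) ^ parM n lam b) (gam P (w b)))"

(* admissible basis elements of W (L = True) resp. W^+ (L = False) *)
definition Wexp :: "bool \<Rightarrow> nat \<Rightarrow> (nat \<Rightarrow> int) \<Rightarrow> bool" where
  "Wexp L m \<alpha> \<longleftrightarrow> (\<forall>k. k \<notin> {1..m} \<longrightarrow> \<alpha> k = 0) \<and> (\<not> L \<longrightarrow> (\<forall>k. \<alpha> k \<ge> 0))"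

end

theory Submission
  imports Defs
begin

(* On a homogeneous u of parity g one has
     \<sigma>(u \<otimes> b) = \<Sum>_c \<partial>t_c u \<otimes> e_c \<and> b - g \<Sum>_l \<partial>\<xi>_l u \<otimes> \<tau>_l b,
   while \<pi>(t^\<alpha> \<xi>_I \<partial>) acts on u \<otimes> b through the operator t^\<alpha> \<xi>_I \<partial> on u and the first
   derivatives of the coefficient t^\<alpha> \<xi>_I paired with generators of gl(m,n).  Both composites
   \<sigma> \<circ> \<pi>(x) and \<pi>(x) \<circ> \<sigma> are expanded on basis vectors.  In \<sigma> \<circ> \<pi>(x) the derivatives of \<sigma>
   are moved past the coefficient with the Leibniz rules of the super Weyl algebra; in
   \<pi>(x) \<circ> \<sigma> the gl(m,n) generators are moved past e_c \<and> and \<tau>_l with their (anti)commutation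
   relations on M(\<lambda>), such as [E_{s,i}, e_c \<and>] = \<delta>_{c,i} e_s \<and> and {E_{s,m+j}, \<tau>_l} = \<delta>_{l,j} e_s \<and>.
   Both sides then reach a common normal form, except for terms with second derivatives of
   t^\<alpha> \<xi>_I in \<sigma> \<circ> \<pi>(x); these cancel, because \<partial>t_s \<partial>t_c is symmetric and \<partial>\<xi>_l \<partial>\<xi>_l' is
   antisymmetric in the two indices while the accompanying coefficients on M(\<lambda>) have the
   opposite symmetry. *)

section \<open>Signs\<close>

definition sign_below :: "nat set \<Rightarrow> nat \<Rightarrow> complex" where
  "sign_below S c = (-1) ^ card {k\<in>S. k < c}"

definition card_sign :: "nat set \<Rightarrow> complex" where
  "card_sign S = (-1) ^ card S"

lemma neg_one_power_pred: "0 < k \<Longrightarrow> (-1::complex) ^ (k - 1) = - ((-1) ^ k)"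
  by (cases k) auto

lemma neg_one_power_diff: "b \<le> a \<Longrightarrow> (-1::complex) ^ (a - b) = (-1) ^ a * (-1) ^ b"
proof -
  assume "b \<le> a"
  then have "(-1::complex) ^ a = (-1) ^ (a - b) * (-1) ^ b" by (simp add: power_add[symmetric])
  then have "(-1::complex) ^ a * (-1) ^ b = (-1) ^ (a - b) * ((-1) ^ b * (-1) ^ b)"
    by (simp add: mult.assoc)
  then show ?thesis by simp
qed

lemma neg_one_card_Diff:
  assumes "finite I"
  shows "(-1::complex) ^ card {k\<in>I - {x}. p k} = (if x \<in> I \<and> p x then -1 else 1) * (-1) ^ card {k\<in>I. p k}"
proof -
  have e: "{k\<in>I - {x}. p k} = {k\<in>I. p k} - {x}" by auto
  show ?thesis
  proof (cases "x \<in> I \<and> p x")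
    case True
    then have "card ({k\<in>I. p k} - {x}) = card {k\<in>I. p k} - 1" "0 < card {k\<in>I. p k}"
      using assms by (auto simp: card_gt_0_iff)
    then show ?thesis unfolding e using True neg_one_power_pred by simp
  next
    case False
    then have "{k\<in>I. p k} - {x} = {k\<in>I. p k}" by auto
    then show ?thesis unfolding e using False by simp
  qed
qed

lemma neg_one_card_insert:
  assumes "finite I" "x \<notin> I"
  shows "(-1::complex) ^ card {k\<in>insert x I. p k} = (if p x then -1 else 1) * (-1) ^ card {k\<in>I. p k}"
proof (cases "p x")
  case True
  then have "{k\<in>insert x I. p k} = insert x {k\<in>I. p k}" by auto
  then show ?thesis using assms True by simp
next
  case False
  then have "{k\<in>insert x I. p k} = {k\<in>I. p k}" by auto
  then show ?thesis using False by simp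
qed

lemma sign_below_insert:
  assumes "finite S"
  shows "sign_below (insert a S) c = (if a \<notin> S \<and> a < c then -1 else 1) * sign_below S c"
proof (cases "a \<in> S")
  case False
  have "(-1::complex) ^ card {k\<in>insert a S. k < c} = (if a < c then -1 else 1) * (-1) ^ card {k\<in>S. k < c}"
    by (rule neg_one_card_insert[OF assms False])
  then show ?thesis using False unfolding sign_below_def by simp
qed (simp add: insert_absorb)

lemma sign_below_Diff:
  "finite S \<Longrightarrow> sign_below (S - {a}) c = (if a \<in> S \<and> a < c then -1 else 1) * sign_below S c"
  unfolding sign_below_def by (rule neg_one_card_Diff)

lemma card_sign_insert: "finite S \<Longrightarrow> card_sign (insert a S) = (if a \<notin> S then -1 else 1) * card_sign S"
  by (simp add: card_sign_def card_insert_if)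

lemma card_sign_Diff: "finite S \<Longrightarrow> card_sign (S - {a}) = (if a \<in> S then -1 else 1) * card_sign S"
proof (cases "a \<in> S")
  case True
  assume "finite S"
  then have "0 < card S" using True card_gt_0_iff by blast
  then show ?thesis using True neg_one_power_pred[of "card S"] \<open>finite S\<close> by (simp add: card_sign_def)
qed (simp add: card_sign_def)

lemma sign_below_square: "sign_below S c * sign_below S c = 1"
  by (simp add: sign_below_def)

lemma sign_below_square_left: "sign_below S c * (sign_below S c * z) = z"
  by (simp add: sign_below_def)

lemma card_sign_square: "card_sign S * card_sign S = 1"
  by (simp add: card_sign_def)

lemma card_sign_square_left: "card_sign S * (card_sign S * z) = z"
  by (simp add: card_sign_def)

lemmas sign_simps = sign_below_insert sign_below_Diff card_sign_insert card_sign_Diff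
  sign_below_square sign_below_square_left card_sign_square card_sign_square_left

lemma sign_between:
  assumes f: "finite S" and k: "k \<in> S" and i: "i \<notin> S"
  shows "(-1::complex) ^ card {s\<in>S. min i k < s \<and> s < max i k} =
    sign_below S i * sign_below S k * (if k < i then -1 else 1)"
proof -
  define B where "B = {s\<in>S. min i k < s \<and> s < max i k}"
  show ?thesis
  proof (cases "k < i")
    case True
    have e: "{s\<in>S. s < i} = {s\<in>S. s < k} \<union> (insert k B)" using True k unfolding B_def by auto
    have "card {s\<in>S. s < i} = card {s\<in>S. s < k} + card (insert k B)"
      unfolding e using f True by (subst card_Un_disjoint) (auto simp: B_def)
    also have "card (insert k B) = 1 + card B" using f by (simp add: B_def)
    finally have "card {s\<in>S. s < i} = card {s\<in>S. s < k} + 1 + card B" by simp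
    then show ?thesis using True unfolding sign_below_def B_def[symmetric] by (simp add: power_add)
  next
    case False
    hence lt: "i < k" using k i by (cases "i = k") auto
    have tri: "x < i \<or> i < x" if "x \<in> S" for x using that i by (cases "x < i") (auto simp: not_less le_less)
    have e: "{s\<in>S. s < k} = {s\<in>S. s < i} \<union> B" using lt tri unfolding B_def
      by (auto simp: min_def max_def)
    have "card {s\<in>S. s < k} = card {s\<in>S. s < i} + card B"
      unfolding e using f lt by (subst card_Un_disjoint) (auto simp: B_def)
    then show ?thesis using False unfolding sign_below_def B_def[symmetric] by (simp add: power_add)
  qed
qed

lemma sign_Edown:
  assumes f: "finite S" and i: "i \<in> S"
  shows "(-1::complex) ^ (card S - card {k\<in>S. k \<le> i}) = - card_sign S * sign_below S i"
proof -
  have "{k\<in>S. k \<le> i} = insert i {k\<in>S. k < i}" using i by auto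
  then have c: "card {k\<in>S. k \<le> i} = Suc (card {k\<in>S. k < i})" using f by simp
  have "card {k\<in>S. k \<le> i} \<le> card S" using f by (intro card_mono) auto
  then show ?thesis by (simp add: neg_one_power_diff c card_sign_def sign_below_def)
qed

lemma neg_one_powi_card: "(-1::complex) powi (int k - 1) = - ((-1) ^ k)"
proof (cases k)
  case 0 then show ?thesis by (simp add: power_int_minus)
next
  case (Suc k')
  then have "int k - 1 = int k'" by simp
  then show ?thesis using Suc by simp
qed
section \<open>The module M(\<lambda>)\<close>

definition S_coord :: "complex \<Rightarrow> complex \<Rightarrow> bool" where
  "S_coord la z \<longleftrightarrow> (la \<notin> \<int> \<longrightarrow> z - la \<in> \<int>) \<and> (la \<in> \<int> \<and> 0 \<le> Re la \<longrightarrow> z \<in> \<int> \<and> 0 \<le> Re z) \<and>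
      (la \<in> \<int> \<and> Re la < 0 \<longrightarrow> z \<in> \<int> \<and> Re z < 0)"

definition nonneg_int :: "complex \<Rightarrow> bool" where "nonneg_int la \<longleftrightarrow> la \<in> \<int> \<and> 0 \<le> Re la"
definition neg_int :: "complex \<Rightarrow> bool" where "neg_int la \<longleftrightarrow> la \<in> \<int> \<and> Re la < 0"

lemma Sset_iff: "\<mu> \<in> Sset n lam \<longleftrightarrow> (\<forall>j\<in>{1..n}. S_coord (lam j) (\<mu> j)) \<and> (\<forall>j. j \<notin> {1..n} \<longrightarrow> \<mu> j = 0)"
  by (simp add: Sset_def S_coord_def)

lemma Sset_S_coord: "\<mu> \<in> Sset n lam \<Longrightarrow> j \<in> {1..n} \<Longrightarrow> S_coord (lam j) (\<mu> j)"
  by (simp add: Sset_iff)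

lemma Sset_upd: "\<mu> \<in> Sset n lam \<Longrightarrow> j \<in> {1..n} \<Longrightarrow> (\<mu>(j := z) \<in> Sset n lam \<longleftrightarrow> S_coord (lam j) z)"
  by (auto simp: Sset_iff)

lemma Sset_upd2: "\<mu> \<in> Sset n lam \<Longrightarrow> j \<in> {1..n} \<Longrightarrow> l \<in> {1..n} \<Longrightarrow> j \<noteq> l \<Longrightarrow>
   (\<mu>(j := a, l := b) \<in> Sset n lam \<longleftrightarrow> S_coord (lam j) a \<and> S_coord (lam l) b)"
  by (auto simp: Sset_iff)

lemma of_int_eq_neg: "(complex_of_int k = -1) = (k = -1)" "(complex_of_int k = -2) = (k = -2)"
proof -
  have a: "(-1::complex) = of_int (-1)" "(-2::complex) = of_int (-2)" by simp_all
  show "(complex_of_int k = -1) = (k = -1)" unfolding a of_int_eq_iff ..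
  show "(complex_of_int k = -2) = (k = -2)" unfolding a of_int_eq_iff ..
qed

lemma S_coord_plus1: "S_coord la z \<Longrightarrow> S_coord la (z + 1) \<longleftrightarrow> \<not> (neg_int la \<and> z = -1)"
proof -
  assume o: "S_coord la z"
  show ?thesis
  proof (cases "la \<in> \<int>")
    case False
    have "z - la \<in> \<int>" using o False by (simp add: S_coord_def)
    then have "(z - la) + 1 \<in> \<int>" by (intro Ints_add Ints_1)
    moreover have "(z - la) + 1 = z + 1 - la" by simp
    ultimately show ?thesis using False by (simp add: S_coord_def neg_int_def)
  next
    case True
    have "z \<in> \<int>" using o True by (auto simp: S_coord_def)
    then obtain k where k: "z = of_int k" by (auto elim: Ints_cases)
    show ?thesis using o True unfolding S_coord_def neg_int_def k by (auto simp: of_int_eq_neg)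
  qed
qed

lemma S_coord_minus1: "S_coord la z \<Longrightarrow> S_coord la (z - 1) \<longleftrightarrow> \<not> (nonneg_int la \<and> z = 0)"
proof -
  assume o: "S_coord la z"
  show ?thesis
  proof (cases "la \<in> \<int>")
    case False
    have "z - la \<in> \<int>" using o False by (simp add: S_coord_def)
    then have "(z - la) - 1 \<in> \<int>" by (rule Ints_diff[OF _ Ints_1])
    moreover have "(z - la) - 1 = z - 1 - la" by simp
    ultimately show ?thesis using False by (simp add: S_coord_def nonneg_int_def)
  next
    case True
    have "z \<in> \<int>" using o True by (auto simp: S_coord_def)
    then obtain k where k: "z = of_int k" by (auto elim: Ints_cases)
    show ?thesis using o True unfolding S_coord_def nonneg_int_def k by (auto simp: of_int_eq_neg)
  qed
qed

lemma S_coord_plus2: "S_coord la z \<Longrightarrow> S_coord la (z + 1 + 1) \<longleftrightarrow> \<not> (neg_int la \<and> (z = -1 \<or> z = -2))"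
proof -
  assume o: "S_coord la z"
  show ?thesis
  proof (cases "la \<in> \<int>")
    case False
    have "z - la \<in> \<int>" using o False by (simp add: S_coord_def)
    then have "(z - la) + 1 + 1 \<in> \<int>" by (intro Ints_add Ints_1)
    moreover have "(z - la) + 1 + 1 = z + 1 + 1 - la" by simp
    ultimately show ?thesis using False by (simp add: S_coord_def neg_int_def)
  next
    case True
    have "z \<in> \<int>" using o True by (auto simp: S_coord_def)
    then obtain k where k: "z = of_int k" by (auto elim: Ints_cases)
    show ?thesis using o True unfolding S_coord_def neg_int_def k by (auto simp: of_int_eq_neg)
  qed
qed

lemma nonneg_not_neg_int: "nonneg_int la \<Longrightarrow> \<not> neg_int la"
  by (auto simp: nonneg_int_def neg_int_def)

lemma S_coord_plus1': "S_coord la z \<Longrightarrow> S_coord la (1 + z) \<longleftrightarrow> \<not> (neg_int la \<and> z = -1)"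
  using S_coord_plus1[of la z] by (simp add: add.commute)
lemma S_coord_const:
  "nonneg_int la \<Longrightarrow> S_coord la 0" "nonneg_int la \<Longrightarrow> S_coord la 1" "neg_int la \<Longrightarrow> S_coord la (-1)" "neg_int la \<Longrightarrow> S_coord la (-2)"
  by (auto simp: S_coord_def nonneg_int_def neg_int_def)

lemma S_coord_const_neg: "neg_int la \<Longrightarrow> S_coord la 0 = False" "nonneg_int la \<Longrightarrow> S_coord la (-1) = False"
  by (auto simp: S_coord_def nonneg_int_def neg_int_def)

lemmas S_coord_simps = Sset_upd Sset_upd2 Sset_S_coord S_coord_plus1 S_coord_minus1 S_coord_plus2 nonneg_not_neg_int S_coord_plus1' S_coord_const S_coord_const_neg

definition coord :: "complex \<times> bidx \<Rightarrow> bidx \<Rightarrow> complex" where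
  "coord e x = (if x = snd e then fst e else 0)"

definition coord_comp :: "(bidx \<Rightarrow> complex \<times> bidx) \<Rightarrow> (bidx \<Rightarrow> complex \<times> bidx) \<Rightarrow> bidx \<Rightarrow> bidx \<Rightarrow> complex" where
  "coord_comp e2 e1 b x = fst (e1 b) * coord (e2 (snd (e1 b))) x"

definition Egl_m_nf :: "nat \<Rightarrow> nat \<Rightarrow> bidx \<Rightarrow> complex \<times> bidx" where
  "Egl_m_nf s i b = (case b of (S, \<mu>) \<Rightarrow>
     (if i \<in> S \<and> (s = i \<or> s \<notin> S) then (if s = i then 1 else sign_below S s * sign_below S i * (if i < s then -1 else 1)) else 0,
      (insert s (S - {i}), \<mu>)))"

definition Edown_nf :: "nat \<Rightarrow> (nat \<Rightarrow> complex) \<Rightarrow> nat \<Rightarrow> nat \<Rightarrow> bidx \<Rightarrow> complex \<times> bidx" where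
  "Edown_nf n lam l i b = (case b of (S, \<mu>) \<Rightarrow>
     (if i \<in> S \<and> \<mu>(l := \<mu> l + 1) \<in> Sset n lam then - card_sign S * sign_below S i else 0,
      (S - {i}, \<mu>(l := \<mu> l + 1))))"

lemma Egl_m_fst: "finite S \<Longrightarrow> fst (Egl_m s i (S, \<mu>)) = fst (Egl_m_nf s i (S, \<mu>))"
  by (auto simp: Egl_m_def Egl_m_nf_def sign_between)
lemma Egl_m_snd: "fst (Egl_m_nf s i (S, \<mu>)) \<noteq> 0 \<Longrightarrow> snd (Egl_m s i (S, \<mu>)) = snd (Egl_m_nf s i (S, \<mu>))"
  by (auto simp: Egl_m_def Egl_m_nf_def insert_absorb split: if_splits)
lemma Edown_fst: "finite S \<Longrightarrow> fst (Edown n lam l i (S, \<mu>)) = fst (Edown_nf n lam l i (S, \<mu>))"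
  by (auto simp: Edown_def Edown_nf_def yv_def sign_Edown)
lemma Edown_snd:
  "fst (Edown_nf n lam l i (S, \<mu>)) \<noteq> 0 \<Longrightarrow> snd (Edown n lam l i (S, \<mu>)) = snd (Edown_nf n lam l i (S, \<mu>))"
  by (auto simp: Edown_def Edown_nf_def yv_def split: if_splits)

lemma wedge_op_nf: "wedge_op i (S, \<mu>) = (if i \<in> S then 0 else sign_below S i, (insert i S, \<mu>))"
  by (auto simp: wedge_op_def insert_absorb sign_below_def)
lemma tau_op_nf:
  "tau_op n lam l (S, \<mu>) = (if \<mu>(l := \<mu> l + 1) \<in> Sset n lam then card_sign S else 0, (S, \<mu>(l := \<mu> l + 1)))"
  by (simp add: tau_op_def yv_def card_sign_def)
lemma Eup_nf:
  "Eup n lam i j (S, \<mu>) = (if i \<notin> S \<and> \<mu>(j := \<mu> j - 1) \<in> Sset n lam then card_sign S * \<mu> j * sign_below S i else 0,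
   (insert i S, \<mu>(j := \<mu> j - 1)))"
  by (auto simp: Eup_def wedge_op_def yv_def insert_absorb sign_below_def card_sign_def)
lemma Egl_n_nf:
  "Egl_n n lam l j (S, \<mu>) = (if \<mu>(j := \<mu> j - 1, l := (\<mu>(j := \<mu> j - 1)) l + 1) \<in> Sset n lam then \<mu> j else 0,
   (S, \<mu>(j := \<mu> j - 1, l := (\<mu>(j := \<mu> j - 1)) l + 1)))"
  by (simp add: Egl_n_def yv_def Let_def)

lemma coord_cong: "fst e = fst e' \<Longrightarrow> (fst e' \<noteq> 0 \<Longrightarrow> snd e = snd e') \<Longrightarrow> coord e x = coord e' x"
  by (cases "fst e' = 0") (auto simp: coord_def)
lemma coord_comp_cong:
  "fst (e1 b) = fst (e1' b) \<Longrightarrow> (fst (e1' b) \<noteq> 0 \<Longrightarrow> snd (e1 b) = snd (e1' b)) \<Longrightarrow> coord_comp e2 e1 b x = coord_comp e2 e1' b x"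
  by (cases "fst (e1' b) = 0") (auto simp: coord_comp_def)

lemma coord_Egl_m: "finite S \<Longrightarrow> coord (Egl_m s i (S, \<mu>)) x = coord (Egl_m_nf s i (S, \<mu>)) x"
  by (rule coord_cong) (auto simp: Egl_m_fst Egl_m_snd)
lemma coord_Edown: "finite S \<Longrightarrow> coord (Edown n lam l i (S, \<mu>)) x = coord (Edown_nf n lam l i (S, \<mu>)) x"
  by (rule coord_cong) (auto simp: Edown_fst Edown_snd)
lemma coord_comp_Egl_m:
  "finite S \<Longrightarrow> coord_comp e2 (Egl_m s i) (S, \<mu>) x = coord_comp e2 (Egl_m_nf s i) (S, \<mu>) x"
  by (rule coord_comp_cong) (auto simp: Egl_m_fst Egl_m_snd)
lemma coord_comp_Edown:
  "finite S \<Longrightarrow> coord_comp e2 (Edown n lam l i) (S, \<mu>) x = coord_comp e2 (Edown_nf n lam l i) (S, \<mu>) x"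
  by (rule coord_comp_cong) (auto simp: Edown_fst Edown_snd)

lemma coord_comp_def':
  "coord_comp e2 e1 b x = coord (fst (e1 b) * fst (e2 (snd (e1 b))), snd (e2 (snd (e1 b)))) x"
  by (simp add: coord_comp_def coord_def)

lemma coord_comp_Egl_m':
  "(fst (e1 b) \<noteq> 0 \<Longrightarrow> finite (fst (snd (e1 b)))) \<Longrightarrow> coord_comp (Egl_m s i) e1 b x = coord_comp (Egl_m_nf s i) e1 b x"
  by (cases "fst (e1 b) = 0") (auto simp: coord_comp_def coord_Egl_m[of "fst (snd (e1 b))" s i "snd (snd (e1 b))", simplified])
lemma coord_comp_Edown':
  "(fst (e1 b) \<noteq> 0 \<Longrightarrow> finite (fst (snd (e1 b)))) \<Longrightarrow> coord_comp (Edown n lam l i) e1 b x = coord_comp (Edown_nf n lam l i) e1 b x"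
  by (cases "fst (e1 b) = 0") (auto simp: coord_comp_def coord_Edown[of "fst (snd (e1 b))" n lam l i "snd (snd (e1 b))", simplified])
lemma coord_eqI: "(fst A \<noteq> 0 \<Longrightarrow> snd A = t) \<Longrightarrow> (fst B \<noteq> 0 \<Longrightarrow> snd B = t) \<Longrightarrow> fst A = fst B \<Longrightarrow> coord A x = coord B x"
  by (cases "fst A = 0") (auto simp: coord_def)
lemma coord_add_eqI: "(fst A \<noteq> 0 \<Longrightarrow> snd A = t) \<Longrightarrow> (fst B \<noteq> 0 \<Longrightarrow> snd B = t) \<Longrightarrow> (fst C \<noteq> 0 \<Longrightarrow> snd C = t) \<Longrightarrow>
   fst A = fst B + fst C \<Longrightarrow> coord A x = coord B x + coord C x"
  by (cases "fst A = 0"; cases "fst B = 0"; cases "fst C = 0") (auto simp: coord_def)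
lemma coord_neg: "- coord A x = coord (- fst A, snd A) x"
  by (simp add: coord_def)
lemma coord_if: "(if P then coord A x else 0) = coord (if P then fst A else 0, snd A) x"
  by (simp add: coord_def)

lemmas nf_simps = wedge_op_nf tau_op_nf Eup_nf Egl_n_nf Egl_m_nf_def Edown_nf_def prod.case fst_conv snd_conv

(* Each relation is checked on a basis vector: after normalising the signs, every term is a
   multiple of one common basis vector t, and the scalar coefficients are compared by cases on
   the memberships and index coincidences involved. *)
lemma Egl_m_wedge_commutator: "finite S \<Longrightarrow> coord_comp (Egl_m s i) (wedge_op c) (S, \<mu>) x =
   coord_comp (wedge_op c) (Egl_m s i) (S, \<mu>) x + (if c = i then coord (wedge_op s (S, \<mu>)) x else 0)"
  apply (simp only: coord_comp_Egl_m coord_comp_Edown)?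
  apply (simp only: coord_comp_Egl_m' coord_comp_Edown' nf_simps finite_insert finite_Diff)?
  apply (simp only: coord_comp_def' coord_if nf_simps)
  apply (rule coord_add_eqI[where t = "if c \<in> S then (insert s S, \<mu>) else (insert s (insert c S - {i}), \<mu>)"])
     apply (auto split: if_splits)[3]
  apply (simp only: fst_conv)
  apply (cases "c \<in> S"; cases "i \<in> S"; cases "s \<in> S"; cases "s = i"; cases "c = i"; cases "c = s")
  apply (simp_all add: sign_simps ac_simps)
  done

lemma wedge_Egl_m_antisym:
  "finite S \<Longrightarrow> coord_comp (wedge_op c) (Egl_m s i) (S, \<mu>) x = - coord_comp (wedge_op s) (Egl_m c i) (S, \<mu>) x"
  apply (simp only: coord_comp_Egl_m coord_comp_Edown)?
  apply (simp only: coord_comp_Egl_m' coord_comp_Edown' nf_simps finite_insert finite_Diff)?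
  apply (simp only: coord_comp_def' coord_if coord_neg nf_simps)
  apply (rule coord_eqI[where t = "(insert c (insert s (S - {i})), \<mu>)"])
    apply (auto split: if_splits)[2]
  apply (simp only: fst_conv)
  apply (cases "c \<in> S"; cases "i \<in> S"; cases "s \<in> S"; cases "s = i"; cases "c = i"; cases "c = s")
  apply (simp_all add: sign_simps ac_simps)
  done

lemma tau_Egl_m:
  "finite S \<Longrightarrow> coord_comp (tau_op n lam l) (Egl_m s i) (S, \<mu>) x = - coord_comp (wedge_op s) (Edown n lam l i) (S, \<mu>) x"
  apply (simp only: coord_comp_Egl_m coord_comp_Edown)?
  apply (simp only: coord_comp_Egl_m' coord_comp_Edown' nf_simps finite_insert finite_Diff)?
  apply (simp only: coord_comp_def' coord_if coord_neg nf_simps)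
  apply (rule coord_eqI[where t = "(insert s (S - {i}), \<mu>(l := \<mu> l + 1))"])
    apply (auto split: if_splits)[2]
  apply (simp only: fst_conv)
  apply (cases "i \<in> S"; cases "s \<in> S"; cases "s = i")
  apply (simp_all add: sign_simps ac_simps)
  done

lemma Edown_wedge_commutator: "finite S \<Longrightarrow> coord_comp (Edown n lam l i) (wedge_op c) (S, \<mu>) x =
   coord_comp (wedge_op c) (Edown n lam l i) (S, \<mu>) x + (if c = i then coord (tau_op n lam l (S, \<mu>)) x else 0)"
  apply (simp only: coord_comp_Egl_m coord_comp_Edown)?
  apply (simp only: coord_comp_Egl_m' coord_comp_Edown' nf_simps finite_insert finite_Diff)?
  apply (simp only: coord_comp_def' coord_if coord_neg nf_simps)
  apply (rule coord_add_eqI[where t = "if c \<in> S then (S, \<mu>(l := \<mu> l + 1)) else (insert c S - {i}, \<mu>(l := \<mu> l + 1))"])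
     apply (auto split: if_splits)[3]
  apply (simp only: fst_conv)
  apply (cases "c \<in> S"; cases "i \<in> S"; cases "c = i")
  apply (simp_all add: sign_simps ac_simps)
  done

lemma tau_Egl_m_commute:
  "finite S \<Longrightarrow> coord_comp (tau_op n lam l) (Egl_m s i) (S, \<mu>) x = coord_comp (Egl_m s i) (tau_op n lam l) (S, \<mu>) x"
  apply (simp only: coord_comp_Egl_m coord_comp_Edown)?
  apply (simp only: coord_comp_Egl_m' coord_comp_Edown' nf_simps finite_insert finite_Diff)?
  apply (simp only: coord_comp_def' coord_if coord_neg nf_simps)
  apply (rule coord_eqI[where t = "(insert s (S - {i}), \<mu>(l := \<mu> l + 1))"])
    apply (auto split: if_splits)[2]
  apply (simp only: fst_conv)
  apply (cases "i \<in> S"; cases "s \<in> S"; cases "s = i")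
  apply (simp_all add: sign_simps ac_simps)
  done

lemma wedge_Eup_commute:
  "finite S \<Longrightarrow> coord_comp (wedge_op c) (Eup n lam s j) (S, \<mu>) x = coord_comp (Eup n lam s j) (wedge_op c) (S, \<mu>) x"
  apply (simp only: coord_comp_def' coord_if coord_neg nf_simps)
  apply (rule coord_eqI[where t = "(insert c (insert s S), \<mu>(j := \<mu> j - 1))"])
    apply (auto split: if_splits)[2]
  apply (simp only: fst_conv)
  apply (cases "c \<in> S"; cases "s \<in> S"; cases "s = c")
  apply (simp_all add: sign_simps ac_simps)
  done

lemma wedge_Eup_antisym:
  "finite S \<Longrightarrow> coord_comp (wedge_op c) (Eup n lam s j) (S, \<mu>) x = - coord_comp (wedge_op s) (Eup n lam c j) (S, \<mu>) x"
  apply (simp only: coord_comp_def' coord_if coord_neg nf_simps)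
  apply (rule coord_eqI[where t = "(insert c (insert s S), \<mu>(j := \<mu> j - 1))"])
    apply (auto split: if_splits)[2]
  apply (simp only: fst_conv)
  apply (cases "c \<in> S"; cases "s \<in> S"; cases "s = c")
  apply (simp_all add: sign_simps ac_simps)
  done

lemma wedge_Egl_n_commute:
  "finite S \<Longrightarrow> coord_comp (wedge_op s) (Egl_n n lam l j) (S, \<mu>) x = coord_comp (Egl_n n lam l j) (wedge_op s) (S, \<mu>) x"
  apply (simp only: coord_comp_def' coord_if coord_neg nf_simps)
  apply (rule coord_eqI[where t = "(insert s S, \<mu>(j := \<mu> j - 1, l := (\<mu>(j := \<mu> j - 1)) l + 1))"])
    apply (auto split: if_splits)[2]
  apply (simp only: fst_conv)
  apply (cases "s \<in> S")
  apply (simp_all add: sign_simps ac_simps)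
  done

lemma Edown_tau_anticommute: "finite S \<Longrightarrow> \<mu> \<in> Sset n lam \<Longrightarrow> l \<in> {1..n} \<Longrightarrow> l' \<in> {1..n} \<Longrightarrow>
  coord_comp (Edown n lam l' i) (tau_op n lam l) (S, \<mu>) x = - coord_comp (tau_op n lam l) (Edown n lam l' i) (S, \<mu>) x"
  apply (simp only: coord_comp_Egl_m coord_comp_Edown)?
  apply (simp only: coord_comp_Egl_m' coord_comp_Edown' nf_simps finite_insert finite_Diff)?
  apply (simp only: coord_comp_def' coord_if coord_neg nf_simps)
  apply (rule coord_eqI[where t = "(S - {i}, \<mu>(l := \<mu> l + 1, l' := (\<mu>(l := \<mu> l + 1)) l' + 1))"])
    apply (auto split: if_splits simp: fun_eq_iff)[2]
  apply (simp only: fst_conv)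
  apply (cases "i \<in> S"; cases "l = l'")
  apply (simp_all add: sign_simps ac_simps S_coord_simps)
  done

lemma tau_Edown_sym: "finite S \<Longrightarrow> \<mu> \<in> Sset n lam \<Longrightarrow> l \<in> {1..n} \<Longrightarrow> l' \<in> {1..n} \<Longrightarrow>
  coord_comp (tau_op n lam l) (Edown n lam l' i) (S, \<mu>) x = coord_comp (tau_op n lam l') (Edown n lam l i) (S, \<mu>) x"
  apply (simp only: coord_comp_Egl_m coord_comp_Edown)?
  apply (simp only: coord_comp_Egl_m' coord_comp_Edown' nf_simps finite_insert finite_Diff)?
  apply (simp only: coord_comp_def' coord_if coord_neg nf_simps)
  apply (rule coord_eqI[where t = "(S - {i}, \<mu>(l := \<mu> l + 1, l' := (\<mu>(l := \<mu> l + 1)) l' + 1))"])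
    apply (auto split: if_splits simp: fun_eq_iff)[2]
  apply (simp only: fst_conv)
  apply (cases "i \<in> S"; cases "l = l'")
  apply (simp_all add: sign_simps ac_simps S_coord_simps)
  done

lemma Eup_tau_anticommutator: "finite S \<Longrightarrow> \<mu> \<in> Sset n lam \<Longrightarrow> l \<in> {1..n} \<Longrightarrow> j \<in> {1..n} \<Longrightarrow>
  coord_comp (Eup n lam s j) (tau_op n lam l) (S, \<mu>) x + coord_comp (tau_op n lam l) (Eup n lam s j) (S, \<mu>) x
   = (if l = j then coord (wedge_op s (S, \<mu>)) x else 0)"
  apply (simp only: coord_comp_def' coord_if coord_neg nf_simps)
  apply (rule sym)
  apply (rule coord_add_eqI[where t = "(insert s S, \<mu>(l := \<mu> l + 1, j := (\<mu>(l := \<mu> l + 1)) j - 1))"])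
     apply (auto split: if_splits simp: fun_eq_iff)[3]
  apply (simp only: fst_conv)
  apply (cases "s \<in> S"; cases "l = j")
  apply (simp_all add: sign_simps ac_simps S_coord_simps algebra_simps)
  done

lemma Egl_n_tau_commutator: "finite S \<Longrightarrow> \<mu> \<in> Sset n lam \<Longrightarrow> l \<in> {1..n} \<Longrightarrow> l' \<in> {1..n} \<Longrightarrow> j \<in> {1..n} \<Longrightarrow>
  coord_comp (Egl_n n lam l' j) (tau_op n lam l) (S, \<mu>) x = coord_comp (tau_op n lam l) (Egl_n n lam l' j) (S, \<mu>) x
   + (if l = j then coord (tau_op n lam l' (S, \<mu>)) x else 0)"
  apply (simp only: coord_comp_def' coord_if coord_neg nf_simps)
  apply (rule coord_add_eqI[where t = "(S, \<mu>(l := \<mu> l + 1, j := (\<mu>(l := \<mu> l + 1)) j - 1,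
        l' := (\<mu>(l := \<mu> l + 1, j := (\<mu>(l := \<mu> l + 1)) j - 1)) l' + 1))"])
     apply (auto split: if_splits simp: fun_eq_iff)[3]
  apply (simp only: fst_conv)
  apply (cases "l = j"; cases "l' = j"; cases "l = l'")
  apply (simp_all add: sign_simps ac_simps S_coord_simps algebra_simps)
  apply (auto simp: S_coord_const_neg)
  done

lemma tau_Eup: "finite S \<Longrightarrow> \<mu> \<in> Sset n lam \<Longrightarrow> l \<in> {1..n} \<Longrightarrow> j \<in> {1..n} \<Longrightarrow>
  coord_comp (tau_op n lam l) (Eup n lam s j) (S, \<mu>) x = - coord_comp (wedge_op s) (Egl_n n lam l j) (S, \<mu>) x"
  apply (simp only: coord_comp_def' coord_if coord_neg nf_simps)
  apply (rule coord_eqI[where t = "(insert s S, \<mu>(j := \<mu> j - 1, l := (\<mu>(j := \<mu> j - 1)) l + 1))"])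
    apply (auto split: if_splits simp: fun_eq_iff)[2]
  apply (simp only: fst_conv)
  apply (cases "s \<in> S"; cases "l = j")
  apply (simp_all add: sign_simps ac_simps S_coord_simps)
  done

lemma tau_Egl_n_sym: "finite S \<Longrightarrow> \<mu> \<in> Sset n lam \<Longrightarrow> l \<in> {1..n} \<Longrightarrow> l' \<in> {1..n} \<Longrightarrow> j \<in> {1..n} \<Longrightarrow>
  coord_comp (tau_op n lam l) (Egl_n n lam l' j) (S, \<mu>) x = coord_comp (tau_op n lam l') (Egl_n n lam l j) (S, \<mu>) x"
  apply (simp only: coord_comp_def' coord_if coord_neg nf_simps)
  apply (rule coord_eqI[where t = "(S, \<mu>(j := \<mu> j - 1, l' := (\<mu>(j := \<mu> j - 1)) l' + 1,
        l := (\<mu>(j := \<mu> j - 1, l' := (\<mu>(j := \<mu> j - 1)) l' + 1)) l + 1))"])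
    apply (auto split: if_splits simp: fun_eq_iff)[2]
  apply (simp only: fst_conv)
  apply (cases "l = j"; cases "l' = j"; cases "l = l'")
  apply (simp_all add: sign_simps ac_simps S_coord_simps)
  apply (auto simp: S_coord_const_neg)
  done

lemma neg_one_mod_pred: "(-1::complex) ^ nat ((k - 1) mod 2) = - ((-1) ^ nat (k mod 2))"
proof (cases "k mod 2 = 0")
  case True
  then have "(k - 1) mod 2 = 1" by presburger
  then show ?thesis using True by simp
next
  case False
  then have "k mod 2 = 1" "(k - 1) mod 2 = 0" by presburger+
  then show ?thesis by simp
qed

lemma parM_shift:
  assumes l: "l \<in> {1..n}"
  shows "(-1::complex) ^ parM n lam (S, \<mu>(l := \<mu> l + 1)) = - ((-1) ^ parM n lam (S', \<mu>))"
proof -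
  have "(\<Sum>j\<in>{1..n}. lam j - (\<mu>(l := \<mu> l + 1)) j) = (\<Sum>j\<in>{1..n}. (lam j - \<mu> j) - (if j = l then 1 else 0))"
    by (rule sum.cong) auto
  also have "\<dots> = (\<Sum>j\<in>{1..n}. lam j - \<mu> j) - (\<Sum>j\<in>{1..n}. (if j = l then 1 else 0))"
    by (rule sum_subtractf)
  also have "(\<Sum>j\<in>{1..n}. (if j = l then 1 else (0::complex))) = 1"
    by (subst sum.delta) (use l in auto)
  finally have e: "(\<Sum>j\<in>{1..n}. lam j - (\<mu>(l := \<mu> l + 1)) j) = (\<Sum>j\<in>{1..n}. lam j - \<mu> j) - 1" .
  have f: "\<lfloor>Re ((\<Sum>j\<in>{1..n}. lam j - \<mu> j) - 1)\<rfloor> = \<lfloor>Re (\<Sum>j\<in>{1..n}. lam j - \<mu> j)\<rfloor> - 1"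
  proof -
    have "Re ((\<Sum>j\<in>{1..n}. lam j - \<mu> j) - 1) = Re (\<Sum>j\<in>{1..n}. lam j - \<mu> j) - 1" by (simp only: minus_complex.sel one_complex.sel)
    then show ?thesis by (simp only: floor_diff_one)
  qed
  show ?thesis unfolding parM_def snd_conv e f by (rule neg_one_mod_pred)
qed
section \<open>Linear operators on a K-module\<close>

lemma lin_iff:
  assumes "vector_space (smul P)"
  shows "lin P f \<longleftrightarrow> (\<forall>a b. f (a + b) = f a + f b) \<and> (\<forall>c a. f (smul P c a) = smul P c (f a))"
  using assms by (simp add: lin_def linear_iff_module_hom module_hom_iff module_iff_vector_space)

lemma commute_funpow: "(\<And>v. X (f v) = f (X v)) \<Longrightarrow> X ((f ^^ k) v) = (f ^^ k) (X v)"
  by (induct k) auto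

locale K_module =
  fixes L :: bool and m n :: nat and P :: "('p::ab_group_add) Kmod"
  assumes Kmod: "is_Kmod L m n P"
begin

sublocale V: vector_space "smul P" using Kmod by (simp add: is_Kmod_def)

lemma lin_I: "(\<And>a b. f (a + b) = f a + f b) \<Longrightarrow> (\<And>c a. f (smul P c a) = smul P c (f a)) \<Longrightarrow> lin P f"
  using lin_iff[OF V.vector_space_axioms] by blast

lemma lin_add: "lin P f \<Longrightarrow> f (a + b) = f a + f b"
  using lin_iff[OF V.vector_space_axioms] by blast
lemma lin_scale: "lin P f \<Longrightarrow> f (smul P c a) = smul P c (f a)"
  using lin_iff[OF V.vector_space_axioms] by blast
lemma lin_zero: "lin P f \<Longrightarrow> f 0 = 0"
  by (metis add_cancel_right_right lin_add)
lemma lin_minus: "lin P f \<Longrightarrow> f (- a) = - f a"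
  by (metis add.right_inverse add_eq_0_iff lin_add lin_zero)
lemma lin_diff: "lin P f \<Longrightarrow> f (a - b) = f a - f b"
  by (metis diff_conv_add_uminus lin_add lin_minus)
lemma lin_sum: "lin P f \<Longrightarrow> f (\<Sum>k\<in>K. g k) = (\<Sum>k\<in>K. f (g k))"
  by (induct K rule: infinite_finite_induct) (auto simp: lin_zero lin_add)
lemma lin_comp: "lin P f \<Longrightarrow> lin P g \<Longrightarrow> lin P (f \<circ> g)"
  by (rule lin_I) (auto simp: lin_add lin_scale)
lemma lin_id: "lin P id"
  by (rule lin_I) auto
lemma lin_funpow: "lin P f \<Longrightarrow> lin P (f ^^ k)"
  by (induct k) (auto simp: lin_id lin_comp)
lemma lin_smul: "lin P (smul P c)"
  by (rule lin_I) (auto simp: V.scale_right_distrib mult.commute)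
lemma lin_zero_fun: "lin P (\<lambda>_. 0)"
  by (rule lin_I) auto

lemma lin_gam: "lin P (gam P)"
  using Kmod by (simp add: is_Kmod_def)
lemma gam_gam[simp]: "gam P (gam P u) = u"
  using Kmod unfolding is_Kmod_def by blast
lemma lin_Tm: "i \<in> {1..m} \<Longrightarrow> lin P (Tm P i)"
  using Kmod unfolding is_Kmod_def by blast
lemma lin_Dt: "i \<in> {1..m} \<Longrightarrow> lin P (Dt P i)"
  using Kmod unfolding is_Kmod_def by blast
lemma lin_Ti: "L \<Longrightarrow> i \<in> {1..m} \<Longrightarrow> lin P (Ti P i)"
  using Kmod unfolding is_Kmod_def by blast
lemma lin_Xi: "j \<in> {1..n} \<Longrightarrow> lin P (Xi P j)"
  using Kmod unfolding is_Kmod_def by blast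
lemma lin_Dx: "j \<in> {1..n} \<Longrightarrow> lin P (Dx P j)"
  using Kmod unfolding is_Kmod_def by blast
lemma gam_Tm: "i \<in> {1..m} \<Longrightarrow> gam P (Tm P i u) = Tm P i (gam P u)"
  using Kmod unfolding is_Kmod_def by blast
lemma gam_Dt: "i \<in> {1..m} \<Longrightarrow> gam P (Dt P i u) = Dt P i (gam P u)"
  using Kmod unfolding is_Kmod_def by blast
lemma gam_Xi: "j \<in> {1..n} \<Longrightarrow> gam P (Xi P j u) = - Xi P j (gam P u)"
  using Kmod unfolding is_Kmod_def by blast
lemma gam_Dx: "j \<in> {1..n} \<Longrightarrow> gam P (Dx P j u) = - Dx P j (gam P u)"
  using Kmod unfolding is_Kmod_def by blast
lemma Dt_Dt: "i \<in> {1..m} \<Longrightarrow> k \<in> {1..m} \<Longrightarrow> Dt P i (Dt P k u) = Dt P k (Dt P i u)"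
  using Kmod unfolding is_Kmod_def by blast
lemma Dt_Tm:
  assumes "i \<in> {1..m}" "k \<in> {1..m}"
  shows "Dt P i (Tm P k u) = Tm P k (Dt P i u) + (if i = k then u else 0)"
proof -
  have "Dt P i (Tm P k u) - Tm P k (Dt P i u) = (if i = k then u else 0)"
    using Kmod assms unfolding is_Kmod_def by blast
  then show ?thesis by (simp add: algebra_simps)
qed
lemma Dx_Dx: "j \<in> {1..n} \<Longrightarrow> l \<in> {1..n} \<Longrightarrow> Dx P j (Dx P l u) = - Dx P l (Dx P j u)"
  using Kmod unfolding is_Kmod_def by blast
lemma Dx_Xi:
  assumes "j \<in> {1..n}" "l \<in> {1..n}"
  shows "Dx P j (Xi P l u) = - Xi P l (Dx P j u) + (if j = l then u else 0)"
proof -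
  have "Dx P j (Xi P l u) + Xi P l (Dx P j u) = (if j = l then u else 0)"
    using Kmod assms unfolding is_Kmod_def by blast
  then show ?thesis by (simp add: algebra_simps)
qed
lemma Tm_Dx: "i \<in> {1..m} \<Longrightarrow> j \<in> {1..n} \<Longrightarrow> Tm P i (Dx P j u) = Dx P j (Tm P i u)"
  using Kmod unfolding is_Kmod_def by blast
lemma Dt_Xi: "i \<in> {1..m} \<Longrightarrow> j \<in> {1..n} \<Longrightarrow> Dt P i (Xi P j u) = Xi P j (Dt P i u)"
  using Kmod unfolding is_Kmod_def by blast
lemma Dt_Dx: "i \<in> {1..m} \<Longrightarrow> j \<in> {1..n} \<Longrightarrow> Dt P i (Dx P j u) = Dx P j (Dt P i u)"
  using Kmod unfolding is_Kmod_def by blast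
lemma Ti_Tm: "L \<Longrightarrow> i \<in> {1..m} \<Longrightarrow> Ti P i (Tm P i u) = u"
  using Kmod unfolding is_Kmod_def by blast
lemma Tm_Ti: "L \<Longrightarrow> i \<in> {1..m} \<Longrightarrow> Tm P i (Ti P i u) = u"
  using Kmod unfolding is_Kmod_def by blast
lemma commute_Ti:
  assumes "L" "i \<in> {1..m}" "\<And>v. X (Tm P i v) = Tm P i (X v)"
  shows "X (Ti P i v) = Ti P i (X v)"
proof -
  have "X (Ti P i v) = Ti P i (Tm P i (X (Ti P i v)))" using Ti_Tm assms by simp
  also have "\<dots> = Ti P i (X (Tm P i (Ti P i v)))" using assms by simp
  also have "\<dots> = Ti P i (X v)" using Tm_Ti assms by simp
  finally show ?thesis .
qed

lemma Dt_Ti: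
  assumes "L" "i \<in> {1..m}"
  shows "Dt P i (Ti P i v) = Ti P i (Dt P i v) - Ti P i (Ti P i v)"
proof -
  define y where "y = Ti P i v"
  have v: "v = Tm P i y" using Tm_Ti assms y_def by simp
  have "Dt P i v = Tm P i (Dt P i y) + y" using Dt_Tm[OF assms(2) assms(2)] v by simp
  hence "Ti P i (Dt P i v) = Dt P i y + Ti P i y"
    using lin_add[OF lin_Ti[OF assms]] Ti_Tm[OF assms] by simp
  thus ?thesis unfolding y_def by (simp add: algebra_simps)
qed

section \<open>The multiplication operators t^\<alpha> \<xi>_I\<close>

definition admissible :: "(nat \<Rightarrow> int) \<Rightarrow> bool" where
  "admissible \<alpha> \<longleftrightarrow> (\<not> L \<longrightarrow> (\<forall>k. 0 \<le> \<alpha> k))"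

definition tfac :: "(nat \<Rightarrow> int) \<Rightarrow> nat \<Rightarrow> 'p \<Rightarrow> 'p" where
  "tfac \<alpha> i = (if 0 \<le> \<alpha> i then Tm P i ^^ nat (\<alpha> i) else Ti P i ^^ nat (- \<alpha> i))"

(* tpow is the product of the tfac over [1..<m+1]; allowing arbitrary lists makes it amenable to
   induction. *)
definition tfacs :: "(nat \<Rightarrow> int) \<Rightarrow> nat list \<Rightarrow> 'p \<Rightarrow> 'p" where
  "tfacs \<alpha> xs = foldr (\<lambda>i f. tfac \<alpha> i \<circ> f) xs id"

lemma tfacs_simps[simp]: "tfacs \<alpha> [] v = v" "tfacs \<alpha> (a # xs) v = tfac \<alpha> a (tfacs \<alpha> xs v)"
  by (simp_all add: tfacs_def)

lemma tpow_tfacs: "tpow P m \<alpha> = tfacs \<alpha> [1..<m+1]"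
  by (simp add: tpow_def tfacs_def tfac_def)

lemma lin_tfac: "admissible \<alpha> \<Longrightarrow> i \<in> {1..m} \<Longrightarrow> lin P (tfac \<alpha> i)"
  by (auto simp: tfac_def admissible_def intro!: lin_funpow lin_Tm lin_Ti)

lemma lin_tfacs: "admissible \<alpha> \<Longrightarrow> set xs \<subseteq> {1..m} \<Longrightarrow> lin P (tfacs \<alpha> xs)"
proof (induct xs)
  case Nil then show ?case using lin_id by (simp add: id_def[symmetric] tfacs_def)
next
  case (Cons a xs)
  have eq: "tfacs \<alpha> (a # xs) = tfac \<alpha> a \<circ> tfacs \<alpha> xs" by (rule ext) simp
  have "lin P (tfac \<alpha> a)" using Cons lin_tfac by auto
  moreover have "lin P (tfacs \<alpha> xs)" using Cons by auto
  ultimately have "lin P (tfac \<alpha> a \<circ> tfacs \<alpha> xs)" by (rule lin_comp)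
  then show ?case unfolding eq .
qed

lemma commute_tfac:
  assumes "admissible \<alpha>" "i \<in> {1..m}" "\<And>v. X (Tm P i v) = Tm P i (X v)"
  shows "X (tfac \<alpha> i v) = tfac \<alpha> i (X v)"
proof (cases "0 \<le> \<alpha> i")
  case True then show ?thesis using assms by (simp add: tfac_def commute_funpow)
next
  case False
  then have L using assms by (auto simp: admissible_def)
  then have "\<And>v. X (Ti P i v) = Ti P i (X v)" using commute_Ti assms by blast
  then show ?thesis using False by (simp add: tfac_def commute_funpow)
qed

lemma commute_tfacs:
  assumes "admissible \<alpha>" "set xs \<subseteq> {1..m}" "\<And>i v. i \<in> set xs \<Longrightarrow> X (Tm P i v) = Tm P i (X v)"
  shows "X (tfacs \<alpha> xs v) = tfacs \<alpha> xs (X v)"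
  using assms by (induct xs arbitrary: v) (auto simp: commute_tfac)

lemma tfacs_cong: "(\<And>i. i \<in> set xs \<Longrightarrow> \<alpha>' i = \<alpha> i) \<Longrightarrow> tfacs \<alpha>' xs v = tfacs \<alpha> xs v"
  by (induct xs arbitrary: v) (auto simp: tfac_def)

lemma Dt_Tm_pow:
  assumes "c \<in> {1..m}"
  shows "Dt P c ((Tm P c ^^ k) v) = (Tm P c ^^ k) (Dt P c v) + smul P (of_nat k) ((Tm P c ^^ (k - 1)) v)"
proof (induct k)
  case 0 then show ?case by simp
next
  case (Suc k)
  have "Dt P c ((Tm P c ^^ Suc k) v) = Tm P c (Dt P c ((Tm P c ^^ k) v)) + (Tm P c ^^ k) v"
    using Dt_Tm[OF assms assms] by simp
  also have "\<dots> = (Tm P c ^^ Suc k) (Dt P c v) + smul P (of_nat k) (Tm P c ((Tm P c ^^ (k - 1)) v)) + (Tm P c ^^ k) v"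
    using Suc lin_add[OF lin_Tm[OF assms]] lin_scale[OF lin_Tm[OF assms]] by simp
  also have "\<dots> = (Tm P c ^^ Suc k) (Dt P c v) + smul P (of_nat (Suc k)) ((Tm P c ^^ k) v)"
  proof (cases k)
    case 0 then show ?thesis by simp
  next
    case (Suc k')
    then have "Tm P c ((Tm P c ^^ (k - 1)) v) = (Tm P c ^^ k) v" by simp
    then show ?thesis by (simp add: V.scale_left_distrib algebra_simps)
  qed
  finally show ?case by simp
qed

lemma Dt_Ti_pow:
  assumes "L" "c \<in> {1..m}"
  shows "Dt P c ((Ti P c ^^ k) v) = (Ti P c ^^ k) (Dt P c v) - smul P (of_nat k) ((Ti P c ^^ (k + 1)) v)"
proof (induct k)
  case 0 then show ?case by simp
next
  case (Suc k)
  note lt = lin_Ti[OF assms]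
  have "Dt P c ((Ti P c ^^ Suc k) v) = Ti P c (Dt P c ((Ti P c ^^ k) v)) - Ti P c (Ti P c ((Ti P c ^^ k) v))"
    using Dt_Ti[OF assms] by simp
  also have "\<dots> = (Ti P c ^^ Suc k) (Dt P c v) - smul P (of_nat k) ((Ti P c ^^ (Suc k + 1)) v) - (Ti P c ^^ (Suc k + 1)) v"
    using Suc lin_diff[OF lt] lin_scale[OF lt] by simp
  also have "\<dots> = (Ti P c ^^ Suc k) (Dt P c v) - smul P (of_nat (Suc k)) ((Ti P c ^^ (Suc k + 1)) v)"
    by (simp add: V.scale_left_distrib algebra_simps)
  finally show ?case .
qed

lemma Dt_tfac:
  assumes "admissible \<alpha>" "c \<in> {1..m}"
  shows "Dt P c (tfac \<alpha> c v) = tfac \<alpha> c (Dt P c v) + smul P (of_int (\<alpha> c)) (tfac (\<alpha>(c := \<alpha> c - 1)) c v)"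
proof (cases "0 \<le> \<alpha> c")
  case True
  show ?thesis
  proof (cases "\<alpha> c = 0")
    case True then show ?thesis by (simp add: tfac_def)
  next
    case False
    define k where "k = nat (\<alpha> c)"
    have q1: "tfac \<alpha> c = Tm P c ^^ k" using True by (simp add: tfac_def k_def)
    have q2: "tfac (\<alpha>(c := \<alpha> c - 1)) c = Tm P c ^^ (k - 1)" using True False
      by (simp add: tfac_def k_def nat_diff_distrib)
    have q3: "(of_int (\<alpha> c)::complex) = of_nat k" using True by (simp add: k_def)
    show ?thesis unfolding q1 q2 q3 by (rule Dt_Tm_pow[OF assms(2)])
  qed
next
  case False
  then have L using assms by (auto simp: admissible_def)
  define k where "k = nat (- \<alpha> c)"
  have q1: "tfac \<alpha> c = Ti P c ^^ k" using False by (simp add: tfac_def k_def)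
  have e: "nat (1 - \<alpha> c) = Suc k" using False k_def by auto
  have q2: "tfac (\<alpha>(c := \<alpha> c - 1)) c = Ti P c ^^ (k + 1)" using False
    unfolding tfac_def by (simp add: e k_def[symmetric])
  have q3: "(of_int (\<alpha> c)::complex) = - of_nat k" using False by (simp add: k_def)
  show ?thesis unfolding q1 q2 q3 V.scale_minus_left diff_conv_add_uminus[symmetric]
    by (rule Dt_Ti_pow[OF \<open>L\<close> assms(2)])
qed

lemma Dt_tfacs:
  assumes "admissible \<alpha>" "c \<in> {1..m}" "distinct xs" "set xs \<subseteq> {1..m}"
  shows "Dt P c (tfacs \<alpha> xs v) = tfacs \<alpha> xs (Dt P c v)
     + (if c \<in> set xs then smul P (of_int (\<alpha> c)) (tfacs (\<alpha>(c := \<alpha> c - 1)) xs v) else 0)"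
  using assms(3,4)
proof (induct xs arbitrary: v)
  case Nil then show ?case by simp
next
  case (Cons a xs)
  have a: "a \<in> {1..m}" and xs: "set xs \<subseteq> {1..m}" "distinct xs" "a \<notin> set xs" using Cons by auto
  note IH = Cons(1)[OF xs(2) xs(1)]
  show ?case
  proof (cases "a = c")
    case True
    have r: "tfacs (\<alpha>(c := \<alpha> c - 1)) xs v = tfacs \<alpha> xs v" by (rule tfacs_cong) (use xs True in auto)
    show ?thesis using True xs IH Dt_tfac[OF assms(1,2)] r by simp
  next
    case False
    have cm: "Dt P c (tfac \<alpha> a w) = tfac \<alpha> a (Dt P c w)" for w
      by (rule commute_tfac[OF assms(1) a]) (use Dt_Tm a assms(2) False in auto)
    have qa: "tfac (\<alpha>(c := \<alpha> c - 1)) a = tfac \<alpha> a" using False by (simp add: tfac_def)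
    show ?thesis using False IH cm qa lin_add[OF lin_tfac[OF assms(1) a]] lin_scale[OF lin_tfac[OF assms(1) a]]
      lin_zero[OF lin_tfac[OF assms(1) a]] by auto
  qed
qed

lemma lin_tpow: "admissible \<alpha> \<Longrightarrow> lin P (tpow P m \<alpha>)"
  unfolding tpow_tfacs by (rule lin_tfacs) auto

lemma commute_tpow: "admissible \<alpha> \<Longrightarrow> (\<And>i v. i \<in> {1..m} \<Longrightarrow> X (Tm P i v) = Tm P i (X v)) \<Longrightarrow>
   X (tpow P m \<alpha> v) = tpow P m \<alpha> (X v)"
  unfolding tpow_tfacs by (rule commute_tfacs) auto

lemma Dt_tpow: "admissible \<alpha> \<Longrightarrow> c \<in> {1..m} \<Longrightarrow>
   Dt P c (tpow P m \<alpha> v) = tpow P m \<alpha> (Dt P c v) + smul P (of_int (\<alpha> c)) (tpow P m (\<alpha>(c := \<alpha> c - 1)) v)"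
  unfolding tpow_tfacs using Dt_tfacs[of \<alpha> c "[1..<m+1]" v] by (force simp del: upt_Suc)

definition xis :: "nat list \<Rightarrow> 'p \<Rightarrow> 'p" where
  "xis xs = foldr (\<lambda>j f. Xi P j \<circ> f) xs id"

lemma xis_simps[simp]: "xis [] v = v" "xis (a # xs) v = Xi P a (xis xs v)"
  by (simp_all add: xis_def)

lemma xiprod_xis: "xiprod P I = xis (sorted_list_of_set I)"
  by (simp add: xiprod_def xis_def)

lemma lin_xis: "set xs \<subseteq> {1..n} \<Longrightarrow> lin P (xis xs)"
proof (induct xs)
  case Nil then show ?case using lin_id by (simp add: id_def[symmetric] xis_def)
next
  case (Cons a xs)
  have eq: "xis (a # xs) = Xi P a \<circ> xis xs" by (rule ext) simp
  have "lin P (Xi P a)" using Cons lin_Xi by auto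
  moreover have "lin P (xis xs)" using Cons by auto
  ultimately have "lin P (Xi P a \<circ> xis xs)" by (rule lin_comp)
  then show ?case unfolding eq .
qed

lemma commute_xis: "(\<And>j v. j \<in> set xs \<Longrightarrow> X (Xi P j v) = Xi P j (X v)) \<Longrightarrow> X (xis xs v) = xis xs (X v)"
  by (induct xs arbitrary: v) auto

lemma gam_xis: "set xs \<subseteq> {1..n} \<Longrightarrow> gam P (xis xs v) = smul P ((-1) ^ length xs) (xis xs (gam P v))"
proof (induct xs arbitrary: v)
  case Nil then show ?case by simp
next
  case (Cons a xs)
  have a: "a \<in> {1..n}" using Cons by auto
  have "gam P (xis (a # xs) v) = - Xi P a (smul P ((-1) ^ length xs) (xis xs (gam P v)))"
    using Cons gam_Xi[OF a] by simp
  also have "\<dots> = smul P ((-1) ^ length (a # xs)) (xis (a # xs) (gam P v))"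
    using lin_scale[OF lin_Xi[OF a]] by simp
  finally show ?case .
qed

lemma Dx_xis:
  assumes "sorted xs" "distinct xs" "set xs \<subseteq> {1..n}" "l \<in> {1..n}"
  shows "Dx P l (xis xs v) = smul P ((-1) ^ length xs) (xis xs (Dx P l v))
    + (if l \<in> set xs then smul P ((-1) ^ length (filter (\<lambda>k. k < l) xs)) (xis (remove1 l xs) v) else 0)"
  using assms(1-3)
proof (induct xs arbitrary: v)
  case Nil then show ?case by simp
next
  case (Cons a xs)
  have a: "a \<in> {1..n}" and xs: "sorted xs" "distinct xs" "set xs \<subseteq> {1..n}" "a \<notin> set xs"
    and lt: "\<And>x. x \<in> set xs \<Longrightarrow> a < x" using Cons by (auto simp: less_le)
  note IH = Cons(1)[OF xs(1-3)]
  note lx = lin_Xi[OF a]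
  have "Dx P l (xis (a # xs) v) = - Xi P a (Dx P l (xis xs v)) + (if l = a then xis xs v else 0)"
    using Dx_Xi[OF assms(4) a] by simp
  also have "\<dots> = smul P ((-1) ^ length (a # xs)) (xis (a # xs) (Dx P l v))
     - (if l \<in> set xs then smul P ((-1) ^ length (filter (\<lambda>k. k < l) xs)) (Xi P a (xis (remove1 l xs) v)) else 0)
     + (if l = a then xis xs v else 0)"
    using IH lin_add[OF lx] lin_scale[OF lx] lin_zero[OF lx] by simp
  also have "\<dots> = smul P ((-1) ^ length (a # xs)) (xis (a # xs) (Dx P l v))
    + (if l \<in> set (a # xs) then smul P ((-1) ^ length (filter (\<lambda>k. k < l) (a # xs))) (xis (remove1 l (a # xs)) v) else 0)"
  proof (cases "l = a")
    case True
    then have "filter (\<lambda>k. k < l) (a # xs) = []" using lt by (force simp: filter_empty_conv)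
    then show ?thesis using True xs(4) by simp
  next
    case False
    show ?thesis
    proof (cases "l \<in> set xs")
      case True
      then have "a < l" using lt by auto
      then show ?thesis using True False by simp
    qed (use False in simp)
  qed
  finally show ?case .
qed

lemma finite_xi_index: "I \<subseteq> {1..n} \<Longrightarrow> finite I"
  using finite_subset by blast

lemma lin_xiprod:
  assumes "I \<subseteq> {1..n}"
  shows "lin P (xiprod P I)"
  unfolding xiprod_xis by (rule lin_xis) (use finite_xi_index[OF assms] assms in auto)

lemma gam_xiprod: "I \<subseteq> {1..n} \<Longrightarrow> gam P (xiprod P I v) = smul P ((-1) ^ card I) (xiprod P I (gam P v))"
  unfolding xiprod_xis using gam_xis[of "sorted_list_of_set I" v] finite_xi_index by auto

lemma Dx_xiprod:
  assumes "I \<subseteq> {1..n}" "l \<in> {1..n}"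
  shows "Dx P l (xiprod P I v) = smul P ((-1) ^ card I) (xiprod P I (Dx P l v))
    + (if l \<in> I then smul P ((-1) ^ card {k\<in>I. k < l}) (xiprod P (I - {l}) v) else 0)"
proof -
  have f: "finite I" using finite_xi_index assms by blast
  have "length (filter (\<lambda>k. k < l) (sorted_list_of_set I)) = card {k\<in>I. k < l}"
    using f by (subst distinct_length_filter) (auto intro: arg_cong[where f=card])
  then show ?thesis unfolding xiprod_xis
    using Dx_xis[of "sorted_list_of_set I" l v] assms f by (simp add: sorted_list_of_set_remove)
qed

lemma mulop_eq: "mulop P m \<alpha> I v = tpow P m \<alpha> (xiprod P I v)"
  by (simp add: mulop_def)

lemma lin_mulop: "admissible \<alpha> \<Longrightarrow> I \<subseteq> {1..n} \<Longrightarrow> lin P (mulop P m \<alpha> I)"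
  unfolding mulop_def by (intro lin_comp lin_tpow lin_xiprod)

lemma gam_mulop: "admissible \<alpha> \<Longrightarrow> I \<subseteq> {1..n} \<Longrightarrow>
  gam P (mulop P m \<alpha> I v) = smul P ((-1) ^ card I) (mulop P m \<alpha> I (gam P v))"
proof -
  assume a: "admissible \<alpha>" "I \<subseteq> {1..n}"
  have "gam P (tpow P m \<alpha> w) = tpow P m \<alpha> (gam P w)" for w
    by (rule commute_tpow[OF a(1)]) (simp add: gam_Tm)
  then show ?thesis unfolding mulop_eq using a by (simp add: gam_xiprod lin_scale[OF lin_tpow])
qed

lemma Dt_mulop:
  assumes "admissible \<alpha>" "I \<subseteq> {1..n}" "c \<in> {1..m}"
  shows "Dt P c (mulop P m \<alpha> I v) = mulop P m \<alpha> I (Dt P c v) + dt_coef P m \<alpha> I c v"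
proof -
  have "Dt P c (xiprod P I v) = xiprod P I (Dt P c v)"
    unfolding xiprod_xis by (rule commute_xis) (use assms Dt_Xi finite_xi_index in auto)
  then show ?thesis unfolding mulop_eq dt_coef_def using Dt_tpow[OF assms(1,3)] by simp
qed

lemma Dx_mulop:
  assumes "admissible \<alpha>" "I \<subseteq> {1..n}" "l \<in> {1..n}"
  shows "Dx P l (mulop P m \<alpha> I v) = smul P ((-1) ^ card I) (mulop P m \<alpha> I (Dx P l v)) + dxi_coef P m \<alpha> I l v"
proof -
  have "Dx P l (tpow P m \<alpha> w) = tpow P m \<alpha> (Dx P l w)" for w
    by (rule commute_tpow[OF assms(1)]) (use Tm_Dx assms in auto)
  then show ?thesis unfolding mulop_eq dxi_coef_def using Dx_xiprod[OF assms(2,3)]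
    lin_add[OF lin_tpow[OF assms(1)]] lin_scale[OF lin_tpow[OF assms(1)]] lin_zero[OF lin_tpow[OF assms(1)]]
    by simp
qed

section \<open>Derivatives of the coefficients\<close>


(* Multiplication by the second derivatives \<partial>\<xi>_l \<partial>t_c, \<partial>\<xi>_l \<partial>\<xi>_l' and \<partial>t_c \<partial>t_s of t^\<alpha> \<xi>_I. *)
definition dt_dxi_coef :: "(nat \<Rightarrow> int) \<Rightarrow> nat set \<Rightarrow> nat \<Rightarrow> nat \<Rightarrow> 'p \<Rightarrow> 'p" where
  "dt_dxi_coef \<alpha> I l c v = (if l \<in> I then smul P (sign_below I l) (dt_coef P m \<alpha> (I - {l}) c v) else 0)"

definition dxi_dxi_coef :: "(nat \<Rightarrow> int) \<Rightarrow> nat set \<Rightarrow> nat \<Rightarrow> nat \<Rightarrow> 'p \<Rightarrow> 'p" where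
  "dxi_dxi_coef \<alpha> I l l' v = (if l' \<in> I then smul P (sign_below I l') (dxi_coef P m \<alpha> (I - {l'}) l v) else 0)"

definition dt_dt_coef :: "(nat \<Rightarrow> int) \<Rightarrow> nat set \<Rightarrow> nat \<Rightarrow> nat \<Rightarrow> 'p \<Rightarrow> 'p" where
  "dt_dt_coef \<alpha> I s c v = smul P (of_int (\<alpha> s)) (dt_coef P m (\<alpha>(s := \<alpha> s - 1)) I c v)"

lemma dxi_coef_sign_below:
  "dxi_coef P m \<alpha> I l v = (if l \<in> I then smul P (sign_below I l) (mulop P m \<alpha> (I - {l}) v) else 0)"
  by (simp add: dxi_coef_def sign_below_def)

lemma admissible_decr: "admissible \<alpha> \<Longrightarrow> \<alpha> s \<noteq> 0 \<Longrightarrow> admissible (\<alpha>(s := \<alpha> s - 1))"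
  by (auto simp: admissible_def) (metis le_less zle_diff1_eq)

lemma dt_coef_zero: "\<alpha> s = 0 \<Longrightarrow> dt_coef P m \<alpha> I s v = 0"
  by (simp add: dt_coef_def)

lemma lin_dt_coef:
  assumes "admissible \<alpha>" "I \<subseteq> {1..n}"
  shows "lin P (dt_coef P m \<alpha> I s)"
proof (cases "\<alpha> s = 0")
  case True
  then have "dt_coef P m \<alpha> I s = (\<lambda>_. 0)" by (simp add: dt_coef_def fun_eq_iff)
  then show ?thesis using lin_zero_fun by simp
next
  case False
  have "dt_coef P m \<alpha> I s = smul P (of_int (\<alpha> s)) \<circ> mulop P m (\<alpha>(s := \<alpha> s - 1)) I"
    by (simp add: dt_coef_def fun_eq_iff)
  then show ?thesis using lin_comp[OF lin_smul lin_mulop[OF admissible_decr[OF assms(1) False] assms(2)]] by simp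
qed

lemma lin_dxi_coef:
  assumes "admissible \<alpha>" "I \<subseteq> {1..n}"
  shows "lin P (dxi_coef P m \<alpha> I l)"
proof (cases "l \<in> I")
  case False
  then have "dxi_coef P m \<alpha> I l = (\<lambda>_. 0)" by (simp add: dxi_coef_def fun_eq_iff)
  then show ?thesis using lin_zero_fun by simp
next
  case True
  have "dxi_coef P m \<alpha> I l = smul P (sign_below I l) \<circ> mulop P m \<alpha> (I - {l})"
    using True by (simp add: dxi_coef_sign_below fun_eq_iff)
  moreover have "I - {l} \<subseteq> {1..n}" using assms by auto
  ultimately show ?thesis using lin_comp[OF lin_smul lin_mulop[OF assms(1)]] by metis
qed

lemma Dt_dt_coef:
  assumes "admissible \<alpha>" "I \<subseteq> {1..n}" "c \<in> {1..m}"
  shows "Dt P c (dt_coef P m \<alpha> I s v) = dt_coef P m \<alpha> I s (Dt P c v) + dt_dt_coef \<alpha> I s c v"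
proof (cases "\<alpha> s = 0")
  case True then show ?thesis by (simp add: dt_dt_coef_def dt_coef_zero lin_zero[OF lin_Dt[OF assms(3)]])
next
  case False
  note ok = admissible_decr[OF assms(1) False]
  show ?thesis unfolding dt_coef_def[of P m \<alpha>] dt_dt_coef_def
    using Dt_mulop[OF ok assms(2,3)] lin_scale[OF lin_Dt[OF assms(3)]] by (simp add: V.scale_right_distrib)
qed

lemma dt_dt_coef_sym: "dt_dt_coef \<alpha> I s c v = dt_dt_coef \<alpha> I c s v"
proof (cases "s = c")
  case False
  then show ?thesis by (simp add: dt_dt_coef_def dt_coef_def fun_upd_twist mult.commute)
qed simp

lemma Dt_dxi_coef:
  assumes "admissible \<alpha>" "I \<subseteq> {1..n}" "c \<in> {1..m}"
  shows "Dt P c (dxi_coef P m \<alpha> I l v) = dxi_coef P m \<alpha> I l (Dt P c v) + dt_dxi_coef \<alpha> I l c v"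
proof (cases "l \<in> I")
  case False then show ?thesis by (simp add: dt_dxi_coef_def dxi_coef_def lin_zero[OF lin_Dt[OF assms(3)]])
next
  case True
  have I2: "I - {l} \<subseteq> {1..n}" using assms by auto
  show ?thesis using True unfolding dxi_coef_sign_below dt_dxi_coef_def
    using Dt_mulop[OF assms(1) I2 assms(3)] lin_scale[OF lin_Dt[OF assms(3)]] by (simp add: V.scale_right_distrib)
qed

lemma Dx_dt_coef:
  assumes "admissible \<alpha>" "I \<subseteq> {1..n}" "l \<in> {1..n}"
  shows "Dx P l (dt_coef P m \<alpha> I s v) = smul P ((-1) ^ card I) (dt_coef P m \<alpha> I s (Dx P l v)) + dt_dxi_coef \<alpha> I l s v"
proof (cases "\<alpha> s = 0")
  case True then show ?thesis by (simp add: dt_dxi_coef_def dt_coef_zero lin_zero[OF lin_Dx[OF assms(3)]])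
next
  case False
  note ok = admissible_decr[OF assms(1) False]
  show ?thesis unfolding dt_coef_def[of P m \<alpha>] dt_dxi_coef_def
    using Dx_mulop[OF ok assms(2,3)] lin_scale[OF lin_Dx[OF assms(3)]]
    by (simp add: V.scale_right_distrib dxi_coef_sign_below mult.commute)
qed

lemma Dx_dxi_coef:
  assumes "admissible \<alpha>" "I \<subseteq> {1..n}" "l \<in> {1..n}"
  shows "Dx P l (dxi_coef P m \<alpha> I l' v) = - smul P ((-1) ^ card I) (dxi_coef P m \<alpha> I l' (Dx P l v)) + dxi_dxi_coef \<alpha> I l l' v"
proof (cases "l' \<in> I")
  case False then show ?thesis by (simp add: dxi_dxi_coef_def dxi_coef_def lin_zero[OF lin_Dx[OF assms(3)]])
next
  case True
  have I2: "I - {l'} \<subseteq> {1..n}" using assms by auto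
  have f: "finite I" using finite_xi_index assms by blast
  have c: "((-1::complex) ^ card (I - {l'})) = - ((-1) ^ card I)"
    using True f neg_one_power_pred[of "card I"] by (simp add: card_Diff_singleton card_gt_0_iff) blast
  show ?thesis using True unfolding dxi_coef_sign_below[of \<alpha> I l'] dxi_dxi_coef_def
    using Dx_mulop[OF assms(1) I2 assms(3)] lin_scale[OF lin_Dx[OF assms(3)]] c
    by (simp add: V.scale_right_distrib V.scale_right_diff_distrib mult.commute)
qed

lemma sum_Dx_dxi_coef:
  assumes "admissible \<alpha>" "I \<subseteq> {1..n}"
  shows "(\<Sum>l'\<in>A. \<Sum>l\<in>{1..n}. smul P (c l l') (Dx P l (dxi_coef P m \<alpha> I l' u)))
       = (\<Sum>l'\<in>A. \<Sum>l\<in>{1..n}. smul P (- (c l l' * (-1) ^ card I)) (dxi_coef P m \<alpha> I l' (Dx P l u)))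
       + (\<Sum>l'\<in>A. \<Sum>l\<in>{1..n}. smul P (c l l') (dxi_dxi_coef \<alpha> I l l' u))"
  by (simp add: Dx_dxi_coef[OF assms] V.scale_right_distrib V.scale_right_diff_distrib sum.distrib sum_subtractf sum_negf)

lemma dxi_dxi_coef_antisym:
  assumes "I \<subseteq> {1..n}"
  shows "dxi_dxi_coef \<alpha> I l l' v = - dxi_dxi_coef \<alpha> I l' l v"
proof -
  have f: "finite I" using finite_xi_index assms by blast
  show ?thesis
  proof (cases "l = l'")
    case True then show ?thesis by (simp add: dxi_dxi_coef_def dxi_coef_def)
  next
    case False
    show ?thesis
    proof (cases "l \<in> I \<and> l' \<in> I")
      case True
      have e: "I - {l'} - {l} = I - {l} - {l'}" by auto
      have s1: "sign_below (I - {l'}) l = (if l' < l then -1 else 1) * sign_below I l"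
        unfolding sign_below_def using neg_one_card_Diff[OF f, of l' "\<lambda>k. k < l"] True by simp
      have s2: "sign_below (I - {l}) l' = (if l < l' then -1 else 1) * sign_below I l'"
        unfolding sign_below_def using neg_one_card_Diff[OF f, of l "\<lambda>k. k < l'"] True by simp
      show ?thesis using True False unfolding dxi_dxi_coef_def dxi_coef_sign_below
        by (auto simp: s1 s2 e)
    next
      case False
      then show ?thesis by (auto simp: dxi_dxi_coef_def dxi_coef_def)
    qed
  qed
qed

definition homog :: "complex \<Rightarrow> 'p \<Rightarrow> bool" where
  "homog g v \<longleftrightarrow> gam P v = smul P g v"

lemma homog_0: "homog g 0" by (simp add: homog_def lin_zero[OF lin_gam])
lemma homog_smul: "homog g v \<Longrightarrow> homog g (smul P c v)"
  by (simp add: homog_def lin_scale[OF lin_gam] mult.commute)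
lemma homog_Dt: "c \<in> {1..m} \<Longrightarrow> homog g v \<Longrightarrow> homog g (Dt P c v)"
  by (simp add: homog_def gam_Dt lin_scale[OF lin_Dt])
lemma homog_Dx: "l \<in> {1..n} \<Longrightarrow> homog g v \<Longrightarrow> homog (- g) (Dx P l v)"
  by (simp add: homog_def gam_Dx lin_scale[OF lin_Dx])
lemma homog_mulop: "admissible \<alpha> \<Longrightarrow> I \<subseteq> {1..n} \<Longrightarrow> homog g v \<Longrightarrow> homog ((-1) ^ card I * g) (mulop P m \<alpha> I v)"
  by (simp add: homog_def gam_mulop lin_scale[OF lin_mulop])
lemma homog_dt_coef:
  assumes "admissible \<alpha>" "I \<subseteq> {1..n}" "homog g v"
  shows "homog ((-1) ^ card I * g) (dt_coef P m \<alpha> I s v)"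
proof (cases "\<alpha> s = 0")
  case True then show ?thesis by (simp add: dt_coef_zero homog_0)
next
  case False
  then show ?thesis unfolding dt_coef_def
    by (intro homog_smul homog_mulop admissible_decr assms)
qed
lemma homog_dxi_coef:
  assumes "admissible \<alpha>" "I \<subseteq> {1..n}" "homog g v"
  shows "homog (- ((-1) ^ card I * g)) (dxi_coef P m \<alpha> I l v)"
proof (cases "l \<in> I")
  case False then show ?thesis by (simp add: dxi_coef_def homog_0)
next
  case True
  have f: "finite I" using finite_xi_index assms by blast
  have c: "((-1::complex) ^ card (I - {l})) = - ((-1) ^ card I)"
    using True f neg_one_power_pred[of "card I"] by (simp add: card_Diff_singleton card_gt_0_iff) blast
  have "homog ((-1) ^ card (I - {l}) * g) (mulop P m \<alpha> (I - {l}) v)"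
    by (rule homog_mulop) (use assms in auto)
  then show ?thesis using True c unfolding dxi_coef_sign_below by (simp add: homog_smul)
qed



section \<open>Coordinatewise linear extension to F(P, M(\<lambda>))\<close>

(* An element w of F(P, M(\<lambda>)) is \<Sum>_b w b \<otimes> b; lin_ext G is the linear operator on F whose
   value on u \<otimes> b is G u b. *)
definition lin_ext :: "('p \<Rightarrow> bidx \<Rightarrow> bidx \<Rightarrow> 'p) \<Rightarrow> (bidx \<Rightarrow> 'p) \<Rightarrow> bidx \<Rightarrow> 'p" where
  "lin_ext G w = (\<lambda>x. \<Sum>b\<in>{b. w b \<noteq> 0}. G (w b) b x)"

definition coeff_linear :: "('p \<Rightarrow> bidx \<Rightarrow> bidx \<Rightarrow> 'p) \<Rightarrow> bool" where
  "coeff_linear G \<longleftrightarrow> (\<forall>u v b x. G (u + v) b x = G u b x + G v b x) \<and> (\<forall>c u b x. G (smul P c u) b x = smul P c (G u b x))"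

definition fin_supp :: "(bidx \<Rightarrow> 'p) \<Rightarrow> bool" where
  "fin_supp w \<longleftrightarrow> finite {b. w b \<noteq> 0}"

lemma coeff_linear_add:
  "coeff_linear G \<Longrightarrow> G (u + v) b x = G u b x + G v b x" unfolding coeff_linear_def by blast
lemma coeff_linear_scale:
  "coeff_linear G \<Longrightarrow> G (smul P c u) b x = smul P c (G u b x)" unfolding coeff_linear_def by blast
lemma coeff_linear_zero: "coeff_linear G \<Longrightarrow> G 0 b x = 0"
  using coeff_linear_scale[of G 0 0 b x] by simp
lemma coeff_linear_sum: "coeff_linear G \<Longrightarrow> G (\<Sum>k\<in>K. f k) b x = (\<Sum>k\<in>K. G (f k) b x)"
  by (induct K rule: infinite_finite_induct) (auto simp: coeff_linear_zero coeff_linear_add)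

lemma lin_ext_superset:
  assumes "coeff_linear G" "finite B" "{b. w b \<noteq> 0} \<subseteq> B"
  shows "lin_ext G w x = (\<Sum>b\<in>B. G (w b) b x)"
  unfolding lin_ext_def
  by (rule sum.mono_neutral_left) (use assms coeff_linear_zero in auto)

lemma lin_ext_add:
  assumes "coeff_linear G" "fin_supp w1" "fin_supp w2"
  shows "lin_ext G (\<lambda>y. w1 y + w2 y) x = lin_ext G w1 x + lin_ext G w2 x"
proof -
  let ?B = "{b. w1 b \<noteq> 0} \<union> {b. w2 b \<noteq> 0}"
  have f: "finite ?B" using assms by (simp add: fin_supp_def)
  have "lin_ext G (\<lambda>y. w1 y + w2 y) x = (\<Sum>b\<in>?B. G (w1 b + w2 b) b x)"
    by (rule lin_ext_superset[OF assms(1) f]) auto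
  also have "\<dots> = (\<Sum>b\<in>?B. G (w1 b) b x) + (\<Sum>b\<in>?B. G (w2 b) b x)"
    by (simp add: coeff_linear_add[OF assms(1)] sum.distrib)
  also have "\<dots> = lin_ext G w1 x + lin_ext G w2 x"
    using lin_ext_superset[OF assms(1) f, of w1 x] lin_ext_superset[OF assms(1) f, of w2 x] by auto
  finally show ?thesis .
qed

lemma sum_coord_support:
  "{y. (\<Sum>k\<in>K. smul P (coord (e k) y * a k) (v k)) \<noteq> 0} \<subseteq> (\<lambda>k. snd (e k)) ` K"
proof
  fix y assume y: "y \<in> {y. (\<Sum>k\<in>K. smul P (coord (e k) y * a k) (v k)) \<noteq> 0}"
  show "y \<in> (\<lambda>k. snd (e k)) ` K"
  proof (rule ccontr)
    assume "y \<notin> (\<lambda>k. snd (e k)) ` K"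
    then have "\<And>k. k \<in> K \<Longrightarrow> coord (e k) y = 0" by (auto simp: coord_def)
    then show False using y by simp
  qed
qed

lemma fin_supp_sum_coord: "finite K \<Longrightarrow> fin_supp (\<lambda>y. \<Sum>k\<in>K. smul P (coord (e k) y * a k) (v k))"
  unfolding fin_supp_def by (rule finite_subset[OF sum_coord_support]) simp

lemma lin_ext_sum_coord:
  assumes "coeff_linear G" "finite K"
  shows "lin_ext G (\<lambda>y. \<Sum>k\<in>K. smul P (coord (e k) y * a k) (v k)) x
       = (\<Sum>k\<in>K. smul P (fst (e k) * a k) (G (v k) (snd (e k)) x))"
proof -
  let ?B = "(\<lambda>k. snd (e k)) ` K"
  have f: "finite ?B" using assms by simp
  have "lin_ext G (\<lambda>y. \<Sum>k\<in>K. smul P (coord (e k) y * a k) (v k)) x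
      = (\<Sum>y\<in>?B. G (\<Sum>k\<in>K. smul P (coord (e k) y * a k) (v k)) y x)"
    by (rule lin_ext_superset[OF assms(1) f sum_coord_support])
  also have "\<dots> = (\<Sum>k\<in>K. \<Sum>y\<in>?B. smul P (coord (e k) y * a k) (G (v k) y x))"
    by (simp add: coeff_linear_sum[OF assms(1)] coeff_linear_scale[OF assms(1)] sum.swap[of _ ?B])
  also have "\<dots> = (\<Sum>k\<in>K. smul P (fst (e k) * a k) (G (v k) (snd (e k)) x))"
  proof (rule sum.cong[OF refl])
    fix k assume k: "k \<in> K"
    have "(\<Sum>y\<in>?B. smul P (coord (e k) y * a k) (G (v k) y x))
        = (\<Sum>y\<in>?B. if y = snd (e k) then smul P (fst (e k) * a k) (G (v k) (snd (e k)) x) else 0)"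
      by (rule sum.cong) (auto simp: coord_def)
    then show "(\<Sum>y\<in>?B. smul P (coord (e k) y * a k) (G (v k) y x)) = smul P (fst (e k) * a k) (G (v k) (snd (e k)) x)"
      using k f by (simp add: sum.delta)
  qed
  finally show ?thesis .
qed

lemma fin_supp_add: "fin_supp w1 \<Longrightarrow> fin_supp w2 \<Longrightarrow> fin_supp (\<lambda>y. w1 y + w2 y)"
  unfolding fin_supp_def by (rule finite_subset[of _ "{b. w1 b \<noteq> 0} \<union> {b. w2 b \<noteq> 0}"]) auto

lemma lin_ext_sum_coord1:
  assumes "coeff_linear G" "finite K"
  shows "lin_ext G (\<lambda>y. \<Sum>k\<in>K. smul P (coord (e k) y) (v k)) x = (\<Sum>k\<in>K. smul P (fst (e k)) (G (v k) (snd (e k)) x))"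
  using lin_ext_sum_coord[OF assms, of e "\<lambda>_. 1" v x] by simp

lemma fin_supp_sum_coord1: "finite K \<Longrightarrow> fin_supp (\<lambda>y. \<Sum>k\<in>K. smul P (coord (e k) y) (v k))"
  using fin_supp_sum_coord[of K e "\<lambda>_. 1" v] by simp

lemma lin_ext_coord1: "coeff_linear G \<Longrightarrow> lin_ext G (\<lambda>y. smul P (coord e y) v) x = smul P (fst e) (G v (snd e) x)"
  using lin_ext_sum_coord1[of G "{0::nat}" "\<lambda>_. e" "\<lambda>_. v" x] by simp

lemma fin_supp_coord1: "fin_supp (\<lambda>y. smul P (coord e y) v)"
  using fin_supp_sum_coord1[of "{0::nat}" "\<lambda>_. e" "\<lambda>_. v"] by simp

lemma fin_supp_I: "finite B \<Longrightarrow> (\<And>x. x \<notin> B \<Longrightarrow> f x = 0) \<Longrightarrow> fin_supp f"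
  unfolding fin_supp_def by (rule finite_subset[of _ B]) auto

lemma fin_supp_sum: "finite K \<Longrightarrow> (\<And>k. k \<in> K \<Longrightarrow> fin_supp (g k)) \<Longrightarrow> fin_supp (\<lambda>x. \<Sum>k\<in>K. g k x)"
proof (induct K rule: finite_induct)
  case empty then show ?case by (simp add: fin_supp_def)
next
  case (insert a K)
  then show ?case by (simp add: fin_supp_add)
qed

lemma lin_ext_zero: "lin_ext G (\<lambda>x. 0) y = 0" by (simp add: lin_ext_def)

lemma lin_ext_sum:
  assumes "coeff_linear G"
  shows "finite K \<Longrightarrow> (\<And>k. k \<in> K \<Longrightarrow> fin_supp (g k)) \<Longrightarrow>
    lin_ext G (\<lambda>x. \<Sum>k\<in>K. g k x) y = (\<Sum>k\<in>K. lin_ext G (g k) y)"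
proof (induct K rule: finite_induct)
  case empty then show ?case by (simp add: lin_ext_zero)
next
  case (insert a K)
  have "lin_ext G (\<lambda>x. \<Sum>k\<in>insert a K. g k x) y = lin_ext G (\<lambda>x. g a x + (\<Sum>k\<in>K. g k x)) y"
    using insert by simp
  also have "\<dots> = lin_ext G (g a) y + lin_ext G (\<lambda>x. \<Sum>k\<in>K. g k x) y"
    by (rule lin_ext_add[OF assms]) (use insert fin_supp_sum in auto)
  finally show ?case using insert by simp
qed

lemma lin_ext_scale:
  assumes "coeff_linear G" "fin_supp w"
  shows "lin_ext G (\<lambda>x. smul P c (w x)) y = smul P c (lin_ext G w y)"
proof -
  have f: "finite {b. w b \<noteq> 0}" using assms(2) by (simp add: fin_supp_def)
  have "lin_ext G (\<lambda>x. smul P c (w x)) y = (\<Sum>b\<in>{b. w b \<noteq> 0}. G (smul P c (w b)) b y)"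
    by (rule lin_ext_superset[OF assms(1) f]) auto
  also have "\<dots> = smul P c (lin_ext G w y)"
    by (simp add: coeff_linear_scale[OF assms(1)] V.scale_sum_right lin_ext_def)
  finally show ?thesis .
qed

lemma lin_ext_commute:
  assumes G: "coeff_linear G" "\<And>u b. fin_supp (G u b)" and H: "coeff_linear H" "\<And>u b. fin_supp (H u b)"
    and w: "fin_supp w" and comm: "\<And>b x. w b \<noteq> 0 \<Longrightarrow> lin_ext G (H (w b) b) x = lin_ext H (G (w b) b) x"
  shows "lin_ext G (lin_ext H w) = lin_ext H (lin_ext G w)"
proof
  fix x
  have f: "finite {b. w b \<noteq> 0}" using w by (simp add: fin_supp_def)
  have "lin_ext G (lin_ext H w) x = (\<Sum>b | w b \<noteq> 0. lin_ext G (H (w b) b) x)"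
    unfolding lin_ext_def[of H] by (rule lin_ext_sum[OF G(1) f]) (rule H(2))
  also have "\<dots> = (\<Sum>b | w b \<noteq> 0. lin_ext H (G (w b) b) x)" using comm by simp
  also have "\<dots> = lin_ext H (lin_ext G w) x"
    unfolding lin_ext_def[of G] by (rule lin_ext_sum[OF H(1) f, symmetric]) (rule G(2))
  finally show "lin_ext G (lin_ext H w) x = lin_ext H (lin_ext G w) x" .
qed

section \<open>Pure tensors with a homogeneous factor\<close>

lemma homog_evp: "homog 1 (evp P u)"
  by (simp add: homog_def evp_def lin_scale[OF lin_gam] lin_add[OF lin_gam] add.commute)
lemma homog_odp: "homog (-1) (odp P u)"
  by (simp add: homog_def odp_def lin_scale[OF lin_gam] lin_diff[OF lin_gam] V.scale_right_diff_distrib)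
lemma evp_odp: "evp P u + odp P u = u"
proof -
  have "evp P u + odp P u = smul P (1/2) (u + gam P u) + smul P (1/2) (u - gam P u)"
    by (simp add: evp_def odp_def)
  also have "\<dots> = smul P (1/2) (u + u)"
    by (simp only: V.scale_right_distrib[symmetric]) (simp add: algebra_simps)
  also have "\<dots> = smul P (1/2 + 1/2) u" by (simp only: V.scale_right_distrib V.scale_left_distrib)
  finally show ?thesis by simp
qed

lemma coeff_linear_evp_odp: "coeff_linear G \<Longrightarrow> G u b x = G (evp P u) b x + G (odp P u) b x"
  using coeff_linear_add[of G "evp P u" "odp P u" b x] by (simp add: evp_odp)

lemma evp_homog: "homog g u \<Longrightarrow> evp P u = smul P ((1 + g) / 2) u"
  by (simp add: evp_def homog_def V.scale_right_distrib V.scale_left_distrib add_divide_distrib)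
lemma odp_homog: "homog g u \<Longrightarrow> odp P u = smul P ((1 - g) / 2) u"
  by (simp add: odp_def homog_def V.scale_right_diff_distrib V.scale_left_diff_distrib diff_divide_distrib)

lemma sgl_coord: "sgl b' (smul P c v) x = smul P (coord (c, b') x) v"
  by (simp add: sgl_def coord_def)

lemma tens_homog:
  assumes "homog g u" "lin P A"
  shows "tens P A e p u x = smul P (coord e x * (if p then g else 1)) (A u)"
proof -
  obtain c b' where e: "e = (c, b')" by (cases e)
  have "tens P A e p u x = smul P (coord (c, b') x) (A (evp P u)) + smul P (coord (c * (if p then -1 else 1), b') x) (A (odp P u))"
    unfolding e tens_def by (simp add: sgl_coord)
  also have "\<dots> = smul P (coord (c, b') x * ((1 + g) / 2) + coord (c * (if p then -1 else 1), b') x * ((1 - g) / 2)) (A u)"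
    using assms by (simp add: evp_homog odp_homog lin_scale V.scale_left_distrib)
  also have "coord (c, b') x * ((1 + g) / 2) + coord (c * (if p then -1 else 1), b') x * ((1 - g) / 2) = coord e x * (if p then g else 1)"
    unfolding e by (auto simp: coord_def field_simps)
  finally show ?thesis .
qed

lemma evp_add: "evp P (u + v) = evp P u + evp P v"
  by (simp add: evp_def lin_add[OF lin_gam] V.scale_right_distrib algebra_simps)
lemma odp_add: "odp P (u + v) = odp P u + odp P v"
  by (simp add: odp_def lin_add[OF lin_gam] V.scale_right_distrib V.scale_right_diff_distrib algebra_simps)
lemma evp_scale: "evp P (smul P c u) = smul P c (evp P u)"
  by (simp add: evp_def lin_scale[OF lin_gam] V.scale_right_distrib mult.commute)
lemma odp_scale: "odp P (smul P c u) = smul P c (odp P u)"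
  by (simp add: odp_def lin_scale[OF lin_gam] V.scale_right_diff_distrib mult.commute)
lemma sgl_add: "sgl b' (u + v) x = sgl b' u x + sgl b' v x" by (simp add: sgl_def)
lemma sgl_scale: "sgl b' (smul P c u) x = smul P c (sgl b' u x)" by (simp add: sgl_def)

lemma tens_add: "lin P A \<Longrightarrow> tens P A e p (u + v) x = tens P A e p u x + tens P A e p v x"
  by (cases e) (simp add: tens_def evp_add odp_add lin_add sgl_add V.scale_right_distrib ac_simps)

lemma tens_scale: "lin P A \<Longrightarrow> tens P A e p (smul P c u) x = smul P c (tens P A e p u x)"
  by (cases e) (simp add: tens_def evp_scale odp_scale lin_scale sgl_scale V.scale_right_distrib mult.commute)

lemma tens_outside: "x \<noteq> snd e \<Longrightarrow> tens P A e p u x = 0"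
  by (cases e) (simp add: tens_def sgl_def)

definition tau_term :: "(nat \<Rightarrow> complex) \<Rightarrow> nat \<Rightarrow> 'p \<Rightarrow> bidx \<Rightarrow> bidx \<Rightarrow> 'p" where
  "tau_term lam l u b x = (case tau_op n lam l b of (c, b') \<Rightarrow>
      sgl b' (smul P c (smul P ((-1) powi (0 - 1)) (Dx P l (evp P u)))) x
    + sgl b' (smul P c (smul P ((-1) powi (1 - 1)) (Dx P l (odp P u)))) x)"

lemma sigma_pure_tau_term:
  "sigma_pure m n lam P u b x =
     (\<Sum>s\<in>{1..m}. tens P (Dt P s) (wedge_op s b) False u x) + (\<Sum>l\<in>{1..n}. tau_term lam l u b x)"
  by (simp add: sigma_pure_def tau_term_def)

lemma tau_term_eq:
  "tau_term lam l u b x = smul P (coord (tau_op n lam l b) x) (Dx P l (odp P u) - Dx P l (evp P u))"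
  by (cases "tau_op n lam l b") (simp add: tau_term_def sgl_def coord_def power_int_minus V.scale_right_diff_distrib)

lemma tau_term_add: "l \<in> {1..n} \<Longrightarrow> tau_term lam l (u + v) b x = tau_term lam l u b x + tau_term lam l v b x"
  by (simp add: tau_term_eq evp_add odp_add lin_add[OF lin_Dx] V.scale_right_distrib V.scale_right_diff_distrib
      algebra_simps)

lemma tau_term_scale: "l \<in> {1..n} \<Longrightarrow> tau_term lam l (smul P a u) b x = smul P a (tau_term lam l u b x)"
  by (simp add: tau_term_eq evp_scale odp_scale lin_scale[OF lin_Dx] V.scale_right_diff_distrib mult.commute)

lemma tau_term_outside: "x \<noteq> snd (tau_op n lam l b) \<Longrightarrow> tau_term lam l u b x = 0"
  by (simp add: tau_term_eq coord_def)

lemma tau_term_homog: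
  assumes "homog g u" "l \<in> {1..n}"
  shows "tau_term lam l u b x = smul P (coord (tau_op n lam l b) x * - g) (Dx P l u)"
proof -
  have "(1 - g) / 2 - (1 + g) / 2 = - g" by (simp add: field_simps)
  then show ?thesis
    by (simp add: tau_term_eq evp_homog[OF assms(1)] odp_homog[OF assms(1)] lin_scale[OF lin_Dx[OF assms(2)]]
        V.scale_scale flip: V.scale_left_diff_distrib)
qed

lemma sigma_pure_homog:
  assumes "homog g u"
  shows "sigma_pure m n lam P u b x =
     (\<Sum>c\<in>{1..m}. smul P (coord (wedge_op c b) x) (Dt P c u))
   + (\<Sum>l\<in>{1..n}. smul P (coord (tau_op n lam l b) x * (- g)) (Dx P l u))"
  unfolding sigma_pure_tau_term
  by (intro arg_cong2[where f = "(+)"] sum.cong refl) (simp_all add: tens_homog[OF assms] lin_Dt tau_term_homog[OF assms])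

lemma coeff_linear_sigma_pure: "coeff_linear (sigma_pure m n lam P)"
  unfolding coeff_linear_def sigma_pure_tau_term
  by (simp add: tens_add tens_scale lin_Dt tau_term_add tau_term_scale sum.distrib V.scale_right_distrib
      V.scale_sum_right ac_simps)

lemma lin_mulop_Dt: "admissible \<alpha> \<Longrightarrow> I \<subseteq> {1..n} \<Longrightarrow> i \<in> {1..m} \<Longrightarrow> lin P (mulop P m \<alpha> I \<circ> Dt P i)"
  by (intro lin_comp lin_mulop lin_Dt)
lemma lin_mulop_Dx: "admissible \<alpha> \<Longrightarrow> I \<subseteq> {1..n} \<Longrightarrow> j \<in> {1..n} \<Longrightarrow> lin P (mulop P m \<alpha> I \<circ> Dx P j)"
  by (intro lin_comp lin_mulop lin_Dx)

lemma actWt_pure_homog: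
  assumes "homog g u" "admissible \<alpha>" "I \<subseteq> {1..n}" "i \<in> {1..m}"
  shows "actWt_pure m n lam P \<alpha> I i u b x =
      smul P (coord (1, b) x) (mulop P m \<alpha> I (Dt P i u))
    + (\<Sum>s\<in>{1..m}. smul P (coord (Egl_m s i b) x) (dt_coef P m \<alpha> I s u))
    + (\<Sum>l\<in>{1..n}. smul P (coord (Edown n lam l i b) x * (- ((-1) ^ card I) * g)) (dxi_coef P m \<alpha> I l u))"
proof -
  have A: "tens P (mulop P m \<alpha> I \<circ> Dt P i) (1, b) False u x = smul P (coord (1, b) x) (mulop P m \<alpha> I (Dt P i u))"
    using tens_homog[OF assms(1) lin_mulop_Dt[OF assms(2,3,4)]] by simp
  have B: "(\<Sum>s\<in>{1..m}. tens P (dt_coef P m \<alpha> I s) (Egl_m s i b) False u x)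
      = (\<Sum>s\<in>{1..m}. smul P (coord (Egl_m s i b) x) (dt_coef P m \<alpha> I s u))"
    by (rule sum.cong[OF refl]) (simp add: tens_homog[OF assms(1) lin_dt_coef[OF assms(2,3)]])
  have C: "smul P ((-1) powi (int (card I) - 1)) (\<Sum>l\<in>{1..n}. tens P (dxi_coef P m \<alpha> I l) (Edown n lam l i b) True u x)
      = (\<Sum>l\<in>{1..n}. smul P (coord (Edown n lam l i b) x * (- ((-1) ^ card I) * g)) (dxi_coef P m \<alpha> I l u))"
    unfolding V.scale_sum_right neg_one_powi_card
    by (rule sum.cong[OF refl]) (simp add: tens_homog[OF assms(1) lin_dxi_coef[OF assms(2,3)]] mult_ac)
  show ?thesis unfolding actWt_pure_def A B C ..
qed

lemma actWx_pure_homog: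
  assumes "homog g u" "admissible \<alpha>" "I \<subseteq> {1..n}" "j \<in> {1..n}"
  shows "actWx_pure m n lam P \<alpha> I j u b x =
      smul P (coord (1, b) x) (mulop P m \<alpha> I (Dx P j u))
    + (\<Sum>s\<in>{1..m}. smul P (coord (Eup n lam s j b) x * g) (dt_coef P m \<alpha> I s u))
    + (\<Sum>l\<in>{1..n}. smul P (coord (Egl_n n lam l j b) x * (- ((-1) ^ card I))) (dxi_coef P m \<alpha> I l u))"
proof -
  have A: "tens P (mulop P m \<alpha> I \<circ> Dx P j) (1, b) False u x = smul P (coord (1, b) x) (mulop P m \<alpha> I (Dx P j u))"
    using tens_homog[OF assms(1) lin_mulop_Dx[OF assms(2,3,4)]] by simp
  have B: "(\<Sum>s\<in>{1..m}. tens P (dt_coef P m \<alpha> I s) (Eup n lam s j b) True u x)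
      = (\<Sum>s\<in>{1..m}. smul P (coord (Eup n lam s j b) x * g) (dt_coef P m \<alpha> I s u))"
    by (rule sum.cong[OF refl]) (simp add: tens_homog[OF assms(1) lin_dt_coef[OF assms(2,3)]])
  have C: "smul P ((-1) powi (int (card I) - 1)) (\<Sum>l\<in>{1..n}. tens P (dxi_coef P m \<alpha> I l) (Egl_n n lam l j b) False u x)
      = (\<Sum>l\<in>{1..n}. smul P (coord (Egl_n n lam l j b) x * (- ((-1) ^ card I))) (dxi_coef P m \<alpha> I l u))"
    unfolding V.scale_sum_right neg_one_powi_card
    by (rule sum.cong[OF refl]) (simp add: tens_homog[OF assms(1) lin_dxi_coef[OF assms(2,3)]] mult_ac)
  show ?thesis unfolding actWx_pure_def A B C ..
qed

lemma coeff_linear_actWt_pure: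
  assumes "admissible \<alpha>" "I \<subseteq> {1..n}" "i \<in> {1..m}"
  shows "coeff_linear (actWt_pure m n lam P \<alpha> I i)"
  unfolding coeff_linear_def
proof (intro conjI allI)
  fix u v b x
  show "actWt_pure m n lam P \<alpha> I i (u + v) b x = actWt_pure m n lam P \<alpha> I i u b x + actWt_pure m n lam P \<alpha> I i v b x"
    unfolding actWt_pure_def
    by (simp add: tens_add lin_mulop_Dt[OF assms] lin_dt_coef[OF assms(1,2)] lin_dxi_coef[OF assms(1,2)] sum.distrib
        V.scale_right_distrib ac_simps)
next
  fix c u b x
  show "actWt_pure m n lam P \<alpha> I i (smul P c u) b x = smul P c (actWt_pure m n lam P \<alpha> I i u b x)"
    unfolding actWt_pure_def
    by (simp add: tens_scale lin_mulop_Dt[OF assms] lin_dt_coef[OF assms(1,2)] lin_dxi_coef[OF assms(1,2)] V.scale_sum_right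
        V.scale_right_distrib mult.commute)
qed

lemma coeff_linear_actWx_pure:
  assumes "admissible \<alpha>" "I \<subseteq> {1..n}" "j \<in> {1..n}"
  shows "coeff_linear (actWx_pure m n lam P \<alpha> I j)"
  unfolding coeff_linear_def
proof (intro conjI allI)
  fix u v b x
  show "actWx_pure m n lam P \<alpha> I j (u + v) b x = actWx_pure m n lam P \<alpha> I j u b x + actWx_pure m n lam P \<alpha> I j v b x"
    unfolding actWx_pure_def
    by (simp add: tens_add lin_mulop_Dx[OF assms] lin_dt_coef[OF assms(1,2)] lin_dxi_coef[OF assms(1,2)] sum.distrib
        V.scale_right_distrib ac_simps)
next
  fix c u b x
  show "actWx_pure m n lam P \<alpha> I j (smul P c u) b x = smul P c (actWx_pure m n lam P \<alpha> I j u b x)"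
    unfolding actWx_pure_def
    by (simp add: tens_scale lin_mulop_Dx[OF assms] lin_dt_coef[OF assms(1,2)] lin_dxi_coef[OF assms(1,2)] V.scale_sum_right
        V.scale_right_distrib mult.commute)
qed

lemma fin_supp_sigma_pure: "fin_supp (sigma_pure m n lam P u b)"
  by (rule fin_supp_I[of "(\<lambda>c. snd (wedge_op c b)) ` {1..m} \<union> (\<lambda>l. snd (tau_op n lam l b)) ` {1..n}"])
    (auto simp: sigma_pure_tau_term tens_outside tau_term_outside image_iff)

lemma fin_supp_actWt_pure: "fin_supp (actWt_pure m n lam P \<alpha> I i u b)"
  by (rule fin_supp_I[of "{b} \<union> (\<lambda>s. snd (Egl_m s i b)) ` {1..m} \<union> (\<lambda>l. snd (Edown n lam l i b)) ` {1..n}"])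
    (auto simp: actWt_pure_def tens_outside image_iff)

lemma fin_supp_actWx_pure: "fin_supp (actWx_pure m n lam P \<alpha> I j u b)"
  by (rule fin_supp_I[of "{b} \<union> (\<lambda>s. snd (Eup n lam s j b)) ` {1..m} \<union> (\<lambda>l. snd (Egl_n n lam l j b)) ` {1..n}"])
    (auto simp: actWx_pure_def tens_outside image_iff)

section \<open>Commutation on pure tensors\<close>

lemma double_sum_skew_zero:
  assumes skew: "\<And>a b. a \<in> A \<Longrightarrow> b \<in> A \<Longrightarrow> f a b = - f b a"
  shows "(\<Sum>a\<in>A. \<Sum>b\<in>A. f a b) = (0::'p)"
proof -
  let ?S = "\<Sum>a\<in>A. \<Sum>b\<in>A. f a b"
  have "?S = (\<Sum>b\<in>A. \<Sum>a\<in>A. f a b)" by (rule sum.swap)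
  also have "\<dots> = (\<Sum>b\<in>A. \<Sum>a\<in>A. - f b a)" by (rule sum.cong[OF refl], rule sum.cong[OF refl], rule skew)
  also have "\<dots> = - ?S" by (simp only: sum_negf)
  finally have eq: "?S = - ?S" .
  have "smul P (1 + 1) ?S = ?S + ?S" by (simp only: V.scale_left_distrib V.scale_one)
  also have "\<dots> = - ?S + ?S" by (subst (1) eq) (rule refl)
  also have "\<dots> = 0" by simp
  finally show ?thesis by simp
qed

lemma double_sum_antisym_sym_zero:
  assumes "\<And>a b. a \<in> A \<Longrightarrow> b \<in> A \<Longrightarrow> c a b = - c b a" "\<And>a b. a \<in> A \<Longrightarrow> b \<in> A \<Longrightarrow> v a b = v b a"
  shows "(\<Sum>a\<in>A. \<Sum>b\<in>A. smul P (c a b) (v a b)) = 0"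
proof (rule double_sum_skew_zero)
  fix a b assume "a \<in> A" "b \<in> A"
  then show "smul P (c a b) (v a b) = - smul P (c b a) (v b a)" using assms[of a b] by simp
qed

lemma double_sum_sym_antisym_zero:
  assumes "\<And>a b. a \<in> A \<Longrightarrow> b \<in> A \<Longrightarrow> c a b = c b a" "\<And>a b. a \<in> A \<Longrightarrow> b \<in> A \<Longrightarrow> v a b = - v b a"
  shows "(\<Sum>a\<in>A. \<Sum>b\<in>A. smul P (c a b) (v a b)) = 0"
proof (rule double_sum_skew_zero)
  fix a b assume "a \<in> A" "b \<in> A"
  then show "smul P (c a b) (v a b) = - smul P (c b a) (v b a)" using assms[of a b] by simp
qed

lemma double_sum_delta:
  assumes "i \<in> A" "finite A"
  shows "(\<Sum>c\<in>A. \<Sum>s\<in>B. smul P (if c = i then f s else 0) (v c s)) = (\<Sum>s\<in>B. smul P (f s) (v i s))"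
proof -
  have "(\<Sum>c\<in>A. \<Sum>s\<in>B. smul P (if c = i then f s else 0) (v c s))
      = (\<Sum>c\<in>A. if c = i then (\<Sum>s\<in>B. smul P (f s) (v i s)) else 0)"
    by (rule sum.cong) auto
  then show ?thesis using assms by simp
qed

lemma double_sum_commutator:
  assumes "i \<in> A" "finite A" "\<And>c s. c \<in> A \<Longrightarrow> s \<in> B \<Longrightarrow> a c s = a' c s + (if c = i then d s else 0)"
  shows "(\<Sum>c\<in>A. \<Sum>s\<in>B. smul P (a c s) (v c s))
       = (\<Sum>s\<in>B. \<Sum>c\<in>A. smul P (a' c s) (v c s)) + (\<Sum>s\<in>B. smul P (d s) (v i s))"
proof -
  have "(\<Sum>c\<in>A. \<Sum>s\<in>B. smul P (a c s) (v c s))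
      = (\<Sum>c\<in>A. \<Sum>s\<in>B. smul P (a' c s) (v c s)) + (\<Sum>c\<in>A. \<Sum>s\<in>B. smul P (if c = i then d s else 0) (v c s))"
    unfolding sum.distrib[symmetric] V.scale_left_distrib[symmetric] using assms(3) by (intro sum.cong refl) simp
  also have "(\<Sum>c\<in>A. \<Sum>s\<in>B. smul P (a' c s) (v c s)) = (\<Sum>s\<in>B. \<Sum>c\<in>A. smul P (a' c s) (v c s))"
    by (rule sum.swap)
  also have "(\<Sum>c\<in>A. \<Sum>s\<in>B. smul P (if c = i then d s else 0) (v c s)) = (\<Sum>s\<in>B. smul P (d s) (v i s))"
    by (rule double_sum_delta[OF assms(1,2)])
  finally show ?thesis .
qed

lemma coord_split: "coord e x = fst e * coord (1, snd e) x"
  by (simp add: coord_def)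

lemma sigma_actWt_pure_expand:
  assumes hu: "homog g u" and ok: "admissible \<alpha>" and I: "I \<subseteq> {1..n}" and i: "i \<in> {1..m}"
  shows "lin_ext (sigma_pure m n lam P) (actWt_pure m n lam P \<alpha> I i u b) x =
     (\<Sum>c\<in>{1..m}. smul P (coord (wedge_op c b) x) (Dt P c (mulop P m \<alpha> I (Dt P i u))))
   + (\<Sum>l\<in>{1..n}. smul P (coord (tau_op n lam l b) x * (- ((-1) ^ card I * g))) (Dx P l (mulop P m \<alpha> I (Dt P i u))))
   + (\<Sum>s\<in>{1..m}. \<Sum>c\<in>{1..m}. smul P (coord_comp (wedge_op c) (Egl_m s i) b x) (Dt P c (dt_coef P m \<alpha> I s u)))
   + (\<Sum>s\<in>{1..m}. \<Sum>l\<in>{1..n}. smul P (coord_comp (tau_op n lam l) (Egl_m s i) b x * (- ((-1) ^ card I * g))) (Dx P l (dt_coef P m \<alpha> I s u)))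
   + (\<Sum>l'\<in>{1..n}. \<Sum>c\<in>{1..m}. smul P (coord_comp (wedge_op c) (Edown n lam l' i) b x * (- ((-1) ^ card I) * g)) (Dt P c (dxi_coef P m \<alpha> I l' u)))
   + (\<Sum>l'\<in>{1..n}. \<Sum>l\<in>{1..n}. smul P (coord_comp (tau_op n lam l) (Edown n lam l' i) b x * (- ((-1) ^ card I) * g) * (- (- ((-1) ^ card I * g))))
        (Dx P l (dxi_coef P m \<alpha> I l' u)))" (is "?L = ?R")
proof -
  let ?sI = "(-1::complex) ^ card I"
  have e: "actWt_pure m n lam P \<alpha> I i u b = (\<lambda>y.
      smul P (coord (1, b) y) (mulop P m \<alpha> I (Dt P i u))
    + (\<Sum>s\<in>{1..m}. smul P (coord (Egl_m s i b) y) (dt_coef P m \<alpha> I s u))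
    + (\<Sum>l\<in>{1..n}. smul P (coord (Edown n lam l i b) y * (- ?sI * g)) (dxi_coef P m \<alpha> I l u)))"
    by (rule HOL.ext) (rule actWt_pure_homog[OF hu ok I i])
  have h0: "homog (?sI * g) (mulop P m \<alpha> I (Dt P i u))" by (intro homog_mulop homog_Dt ok I i hu)
  have h1: "homog (?sI * g) (dt_coef P m \<alpha> I s u)" for s by (intro homog_dt_coef ok I hu)
  have h2: "homog (- (?sI * g)) (dxi_coef P m \<alpha> I l u)" for l by (intro homog_dxi_coef ok I hu)
  have "lin_ext (sigma_pure m n lam P) (actWt_pure m n lam P \<alpha> I i u b) x =
      smul P (fst (1::complex, b)) (sigma_pure m n lam P (mulop P m \<alpha> I (Dt P i u)) (snd (1::complex, b)) x)
    + (\<Sum>s\<in>{1..m}. smul P (fst (Egl_m s i b)) (sigma_pure m n lam P (dt_coef P m \<alpha> I s u) (snd (Egl_m s i b)) x))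
    + (\<Sum>l\<in>{1..n}. smul P (fst (Edown n lam l i b) * (- ?sI * g)) (sigma_pure m n lam P (dxi_coef P m \<alpha> I l u) (snd (Edown n lam l i b)) x))"
    unfolding e
    by (simp only: lin_ext_add coeff_linear_sigma_pure fin_supp_add fin_supp_coord1 fin_supp_sum_coord1 fin_supp_sum_coord finite_atLeastAtMost
        lin_ext_coord1 lin_ext_sum_coord1 lin_ext_sum_coord)
  also have "\<dots> = ?R"
    by (simp add: sigma_pure_homog[OF h0] sigma_pure_homog[OF h1] sigma_pure_homog[OF h2] V.scale_right_distrib V.scale_sum_right
        sum.distrib coord_comp_def mult_ac)
  finally show ?thesis .
qed

lemma actWt_sigma_pure_expand:
  assumes hu: "homog g u" and ok: "admissible \<alpha>" and I: "I \<subseteq> {1..n}" and i: "i \<in> {1..m}"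
  shows "lin_ext (actWt_pure m n lam P \<alpha> I i) (sigma_pure m n lam P u b) x =
     (\<Sum>c\<in>{1..m}. smul P (coord (wedge_op c b) x) (mulop P m \<alpha> I (Dt P i (Dt P c u))))
   + (\<Sum>c\<in>{1..m}. \<Sum>s\<in>{1..m}. smul P (coord_comp (Egl_m s i) (wedge_op c) b x) (dt_coef P m \<alpha> I s (Dt P c u)))
   + (\<Sum>c\<in>{1..m}. \<Sum>l'\<in>{1..n}. smul P (coord_comp (Edown n lam l' i) (wedge_op c) b x * (- ((-1) ^ card I) * g)) (dxi_coef P m \<alpha> I l' (Dt P c u)))
   + (\<Sum>l\<in>{1..n}. smul P (coord (tau_op n lam l b) x * - g) (mulop P m \<alpha> I (Dt P i (Dx P l u))))
   + (\<Sum>l\<in>{1..n}. \<Sum>s\<in>{1..m}. smul P (coord_comp (Egl_m s i) (tau_op n lam l) b x * - g) (dt_coef P m \<alpha> I s (Dx P l u)))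
   + (\<Sum>l\<in>{1..n}. \<Sum>l'\<in>{1..n}. smul P (coord_comp (Edown n lam l' i) (tau_op n lam l) b x * - g * (- ((-1) ^ card I) * - g))
        (dxi_coef P m \<alpha> I l' (Dx P l u)))" (is "?L = ?R")
proof -
  have e: "sigma_pure m n lam P u b = (\<lambda>y.
     (\<Sum>c\<in>{1..m}. smul P (coord (wedge_op c b) y) (Dt P c u))
   + (\<Sum>l\<in>{1..n}. smul P (coord (tau_op n lam l b) y * (- g)) (Dx P l u)))"
    by (rule HOL.ext) (rule sigma_pure_homog[OF hu])
  note lw = coeff_linear_actWt_pure[OF ok I i]
  have "?L = (\<Sum>c\<in>{1..m}. smul P (fst (wedge_op c b)) (actWt_pure m n lam P \<alpha> I i (Dt P c u) (snd (wedge_op c b)) x))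
     + (\<Sum>l\<in>{1..n}. smul P (fst (tau_op n lam l b) * (- g)) (actWt_pure m n lam P \<alpha> I i (Dx P l u) (snd (tau_op n lam l b)) x))"
    unfolding e
    by (simp only: lin_ext_add lw fin_supp_add fin_supp_sum_coord1 fin_supp_sum_coord finite_atLeastAtMost lin_ext_sum_coord1 lin_ext_sum_coord)
  also have "\<dots> = ?R"
    by (simp add: actWt_pure_homog[OF homog_Dt[OF _ hu] ok I i] actWt_pure_homog[OF homog_Dx[OF _ hu] ok I i]
        V.scale_right_distrib V.scale_sum_right sum.distrib coord_comp_def mult_ac
        coord_split[of "wedge_op c b" for c] coord_split[of "tau_op n lam l b" for l] sum_subtractf sum_negf V.scale_right_diff_distrib)
  finally show ?thesis .
qed

lemma sigma_actWx_pure_expand: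
  assumes hu: "homog g u" and ok: "admissible \<alpha>" and I: "I \<subseteq> {1..n}" and j: "j \<in> {1..n}"
  shows "lin_ext (sigma_pure m n lam P) (actWx_pure m n lam P \<alpha> I j u b) x =
     (\<Sum>c\<in>{1..m}. smul P (coord (wedge_op c b) x) (Dt P c (mulop P m \<alpha> I (Dx P j u))))
   + (\<Sum>l\<in>{1..n}. smul P (coord (tau_op n lam l b) x * (- (((-1) ^ card I) * - g))) (Dx P l (mulop P m \<alpha> I (Dx P j u))))
   + (\<Sum>s\<in>{1..m}. \<Sum>c\<in>{1..m}. smul P (coord_comp (wedge_op c) (Eup n lam s j) b x * g) (Dt P c (dt_coef P m \<alpha> I s u)))
   + (\<Sum>s\<in>{1..m}. \<Sum>l\<in>{1..n}. smul P (coord_comp (tau_op n lam l) (Eup n lam s j) b x * g * (- (((-1) ^ card I) * g))) (Dx P l (dt_coef P m \<alpha> I s u)))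
   + (\<Sum>l'\<in>{1..n}. \<Sum>c\<in>{1..m}. smul P (coord_comp (wedge_op c) (Egl_n n lam l' j) b x * - ((-1) ^ card I)) (Dt P c (dxi_coef P m \<alpha> I l' u)))
   + (\<Sum>l'\<in>{1..n}. \<Sum>l\<in>{1..n}. smul P (coord_comp (tau_op n lam l) (Egl_n n lam l' j) b x * - ((-1) ^ card I) * (- (- (((-1) ^ card I) * g)))) (Dx P l (dxi_coef P m \<alpha> I l' u)))"
    (is "?L = ?R")
proof -
  let ?sI = "(-1::complex) ^ card I"
  have e: "actWx_pure m n lam P \<alpha> I j u b = (\<lambda>y.
      smul P (coord (1, b) y) (mulop P m \<alpha> I (Dx P j u))
    + (\<Sum>s\<in>{1..m}. smul P (coord (Eup n lam s j b) y * g) (dt_coef P m \<alpha> I s u))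
    + (\<Sum>l\<in>{1..n}. smul P (coord (Egl_n n lam l j b) y * (- ?sI)) (dxi_coef P m \<alpha> I l u)))"
    by (rule HOL.ext) (rule actWx_pure_homog[OF hu ok I j])
  have h0: "homog (?sI * - g) (mulop P m \<alpha> I (Dx P j u))" by (intro homog_mulop homog_Dx ok I j hu)
  have h1: "homog (?sI * g) (dt_coef P m \<alpha> I s u)" for s by (intro homog_dt_coef ok I hu)
  have h2: "homog (- (?sI * g)) (dxi_coef P m \<alpha> I l u)" for l by (intro homog_dxi_coef ok I hu)
  have "?L =
      smul P (fst (1::complex, b)) (sigma_pure m n lam P (mulop P m \<alpha> I (Dx P j u)) (snd (1::complex, b)) x)
    + (\<Sum>s\<in>{1..m}. smul P (fst (Eup n lam s j b) * g) (sigma_pure m n lam P (dt_coef P m \<alpha> I s u) (snd (Eup n lam s j b)) x))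
    + (\<Sum>l\<in>{1..n}. smul P (fst (Egl_n n lam l j b) * (- ?sI)) (sigma_pure m n lam P (dxi_coef P m \<alpha> I l u) (snd (Egl_n n lam l j b)) x))"
    unfolding e
    by (simp only: lin_ext_add coeff_linear_sigma_pure fin_supp_add fin_supp_coord1 fin_supp_sum_coord1 fin_supp_sum_coord finite_atLeastAtMost
        lin_ext_coord1 lin_ext_sum_coord1 lin_ext_sum_coord)
  also have "\<dots> = ?R"
    by (simp add: sigma_pure_homog[OF h0] sigma_pure_homog[OF h1] sigma_pure_homog[OF h2] V.scale_right_distrib V.scale_sum_right
        sum.distrib coord_comp_def mult_ac sum_subtractf sum_negf V.scale_right_diff_distrib)
  finally show ?thesis .
qed

lemma actWx_sigma_pure_expand:
  assumes hu: "homog g u" and ok: "admissible \<alpha>" and I: "I \<subseteq> {1..n}" and j: "j \<in> {1..n}"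
  shows "lin_ext (actWx_pure m n lam P \<alpha> I j) (sigma_pure m n lam P u b) x =
     (\<Sum>c\<in>{1..m}. smul P (coord (wedge_op c b) x) (mulop P m \<alpha> I (Dx P j (Dt P c u))))
   + (\<Sum>c\<in>{1..m}. \<Sum>s\<in>{1..m}. smul P (coord_comp (Eup n lam s j) (wedge_op c) b x * g) (dt_coef P m \<alpha> I s (Dt P c u)))
   + (\<Sum>c\<in>{1..m}. \<Sum>l'\<in>{1..n}. smul P (coord_comp (Egl_n n lam l' j) (wedge_op c) b x * - ((-1) ^ card I)) (dxi_coef P m \<alpha> I l' (Dt P c u)))
   + (\<Sum>l\<in>{1..n}. smul P (coord (tau_op n lam l b) x * - g) (mulop P m \<alpha> I (Dx P j (Dx P l u))))
   + (\<Sum>l\<in>{1..n}. \<Sum>s\<in>{1..m}. smul P (coord_comp (Eup n lam s j) (tau_op n lam l) b x * - g * - g) (dt_coef P m \<alpha> I s (Dx P l u)))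
   + (\<Sum>l\<in>{1..n}. \<Sum>l'\<in>{1..n}. smul P (coord_comp (Egl_n n lam l' j) (tau_op n lam l) b x * - g * - ((-1) ^ card I)) (dxi_coef P m \<alpha> I l' (Dx P l u)))"
    (is "?L = ?R")
proof -
  have e: "sigma_pure m n lam P u b = (\<lambda>y.
     (\<Sum>c\<in>{1..m}. smul P (coord (wedge_op c b) y) (Dt P c u))
   + (\<Sum>l\<in>{1..n}. smul P (coord (tau_op n lam l b) y * (- g)) (Dx P l u)))"
    by (rule HOL.ext) (rule sigma_pure_homog[OF hu])
  note lw = coeff_linear_actWx_pure[OF ok I j]
  have "?L = (\<Sum>c\<in>{1..m}. smul P (fst (wedge_op c b)) (actWx_pure m n lam P \<alpha> I j (Dt P c u) (snd (wedge_op c b)) x))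
     + (\<Sum>l\<in>{1..n}. smul P (fst (tau_op n lam l b) * (- g)) (actWx_pure m n lam P \<alpha> I j (Dx P l u) (snd (tau_op n lam l b)) x))"
    unfolding e
    by (simp only: lin_ext_add lw fin_supp_add fin_supp_sum_coord1 fin_supp_sum_coord finite_atLeastAtMost lin_ext_sum_coord1 lin_ext_sum_coord)
  also have "\<dots> = ?R"
    by (simp add: actWx_pure_homog[OF homog_Dt[OF _ hu] ok I j] actWx_pure_homog[OF homog_Dx[OF _ hu] ok I j]
        V.scale_right_distrib V.scale_sum_right sum.distrib coord_comp_def mult_ac
        coord_split[of "wedge_op c b" for c b] coord_split[of "tau_op n lam l b" for l b] sum_subtractf sum_negf
        V.scale_right_diff_distrib)
  finally show ?thesis .
qed


(* The coefficient at x of both \<sigma>(\<pi>(t^\<alpha> \<xi>_I \<partial>t_i)(u \<otimes> b)) and \<pi>(t^\<alpha> \<xi>_I \<partial>t_i)(\<sigma>(u \<otimes> b)),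
   for u homogeneous of parity g. *)
definition actWt_nf :: "(nat \<Rightarrow> complex) \<Rightarrow> (nat \<Rightarrow> int) \<Rightarrow> nat set \<Rightarrow> nat \<Rightarrow> complex \<Rightarrow> 'p \<Rightarrow> bidx \<Rightarrow> bidx \<Rightarrow> 'p"
  where "actWt_nf lam \<alpha> I i g u b x =
      (\<Sum>c\<in>{1..m}. smul P (coord (wedge_op c b) x) (mulop P m \<alpha> I (Dt P i (Dt P c u))))
    + (\<Sum>c\<in>{1..m}. smul P (coord (wedge_op c b) x) (dt_coef P m \<alpha> I c (Dt P i u)))
    + (\<Sum>l\<in>{1..n}. smul P (coord (tau_op n lam l b) x * - g) (mulop P m \<alpha> I (Dt P i (Dx P l u))))
    + (\<Sum>l\<in>{1..n}. smul P (coord (tau_op n lam l b) x * - ((-1) ^ card I * g)) (dxi_coef P m \<alpha> I l (Dt P i u)))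
    + (\<Sum>s\<in>{1..m}. \<Sum>c\<in>{1..m}. smul P (coord_comp (wedge_op c) (Egl_m s i) b x) (dt_coef P m \<alpha> I s (Dt P c u)))
    + (\<Sum>s\<in>{1..m}. \<Sum>l\<in>{1..n}. smul P (coord_comp (tau_op n lam l) (Egl_m s i) b x * - g) (dt_coef P m \<alpha> I s (Dx P l u)))
    + (\<Sum>l\<in>{1..n}. \<Sum>c\<in>{1..m}.
         smul P (coord_comp (wedge_op c) (Edown n lam l i) b x * - ((-1) ^ card I * g)) (dxi_coef P m \<alpha> I l (Dt P c u)))
    + (\<Sum>l'\<in>{1..n}. \<Sum>l\<in>{1..n}.
         smul P (coord_comp (tau_op n lam l) (Edown n lam l' i) b x * (-1) ^ card I) (dxi_coef P m \<alpha> I l' (Dx P l u)))"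

lemma actWt_dt_dt_terms_zero:
  assumes "finite S"
  shows "(\<Sum>s\<in>{1..m}. \<Sum>c\<in>{1..m}. smul P (coord_comp (wedge_op c) (Egl_m s i) (S, \<mu>) x) (dt_dt_coef \<alpha> I s c u)) = 0"
  by (rule double_sum_antisym_sym_zero) (rule wedge_Egl_m_antisym[OF assms], rule dt_dt_coef_sym)

lemma actWt_dxi_dxi_terms_zero:
  assumes "I \<subseteq> {1..n}" "finite S" "\<mu> \<in> Sset n lam"
  shows "(\<Sum>l'\<in>{1..n}. \<Sum>l\<in>{1..n}.
      smul P (coord_comp (tau_op n lam l) (Edown n lam l' i) (S, \<mu>) x) (dxi_dxi_coef \<alpha> I l l' u)) = 0"
  by (rule double_sum_sym_antisym_zero) (simp add: tau_Edown_sym[OF assms(2,3)], rule dxi_dxi_coef_antisym[OF assms(1)])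

lemma actWt_mixed_terms_zero:
  assumes "finite S"
  shows "(\<Sum>s\<in>{1..m}. \<Sum>l\<in>{1..n}.
      smul P (coord_comp (tau_op n lam l) (Egl_m s i) (S, \<mu>) x * - ((-1) ^ card I * g)) (dt_dxi_coef \<alpha> I l s u))
    + (\<Sum>l'\<in>{1..n}. \<Sum>c\<in>{1..m}.
      smul P (coord_comp (wedge_op c) (Edown n lam l' i) (S, \<mu>) x * (- ((-1) ^ card I) * g)) (dt_dxi_coef \<alpha> I l' c u)) = 0"
proof -
  let ?k = "- ((-1::complex) ^ card I) * g"
  have "(\<Sum>l'\<in>{1..n}. \<Sum>c\<in>{1..m}. smul P (coord_comp (wedge_op c) (Edown n lam l' i) (S, \<mu>) x * ?k) (dt_dxi_coef \<alpha> I l' c u))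
      = (\<Sum>s\<in>{1..m}. \<Sum>l\<in>{1..n}. smul P (coord_comp (wedge_op s) (Edown n lam l i) (S, \<mu>) x * ?k) (dt_dxi_coef \<alpha> I l s u))"
    by (rule sum.swap)
  moreover have "coord_comp (tau_op n lam l) (Egl_m s i) (S, \<mu>) x = - coord_comp (wedge_op s) (Edown n lam l i) (S, \<mu>) x" for s l
    by (rule tau_Egl_m[OF assms])
  ultimately show ?thesis by (simp add: sum_negf)
qed

lemma sigma_actWt_pure_nf:
  assumes hu: "homog g u" and gg: "g * g = 1" and ok: "admissible \<alpha>" and I: "I \<subseteq> {1..n}"
    and i: "i \<in> {1..m}" and fS: "finite S" and mu: "\<mu> \<in> Sset n lam"
  shows "lin_ext (sigma_pure m n lam P) (actWt_pure m n lam P \<alpha> I i u (S, \<mu>)) x = actWt_nf lam \<alpha> I i g u (S, \<mu>) x"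
proof -
  let ?sI = "(-1::complex) ^ card I" and ?cc = "\<lambda>E E'. coord_comp E E' (S, \<mu>) x"
  let ?w = "\<lambda>c. coord (wedge_op c (S, \<mu>)) x" and ?t = "\<lambda>l. coord (tau_op n lam l (S, \<mu>)) x"
  let ?A = "mulop P m \<alpha> I" and ?dt = "dt_coef P m \<alpha> I" and ?dx = "dxi_coef P m \<alpha> I"
  have E1: "(\<Sum>c\<in>{1..m}. smul P (?w c) (Dt P c (?A (Dt P i u))))
      = (\<Sum>c\<in>{1..m}. smul P (?w c) (?A (Dt P i (Dt P c u)))) + (\<Sum>c\<in>{1..m}. smul P (?w c) (?dt c (Dt P i u)))"
    by (simp add: Dt_mulop[OF ok I] Dt_Dt[OF i] V.scale_right_distrib sum.distrib)
  have E2: "(\<Sum>l\<in>{1..n}. smul P (?t l * (- (?sI * g))) (Dx P l (?A (Dt P i u))))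
      = (\<Sum>l\<in>{1..n}. smul P (?t l * - g) (?A (Dt P i (Dx P l u))))
      + (\<Sum>l\<in>{1..n}. smul P (?t l * (- (?sI * g))) (?dx l (Dt P i u)))"
    by (simp add: Dx_mulop[OF ok I] Dt_Dx[OF i] V.scale_right_distrib sum.distrib mult_ac sum_subtractf sum_negf)
  have E3: "(\<Sum>s\<in>{1..m}. \<Sum>c\<in>{1..m}. smul P (?cc (wedge_op c) (Egl_m s i)) (Dt P c (?dt s u)))
      = (\<Sum>s\<in>{1..m}. \<Sum>c\<in>{1..m}. smul P (?cc (wedge_op c) (Egl_m s i)) (?dt s (Dt P c u)))
      + (\<Sum>s\<in>{1..m}. \<Sum>c\<in>{1..m}. smul P (?cc (wedge_op c) (Egl_m s i)) (dt_dt_coef \<alpha> I s c u))"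
    by (simp add: Dt_dt_coef[OF ok I] V.scale_right_distrib sum.distrib)
  have E4: "(\<Sum>s\<in>{1..m}. \<Sum>l\<in>{1..n}. smul P (?cc (tau_op n lam l) (Egl_m s i) * (- (?sI * g))) (Dx P l (?dt s u)))
      = (\<Sum>s\<in>{1..m}. \<Sum>l\<in>{1..n}. smul P (?cc (tau_op n lam l) (Egl_m s i) * - g) (?dt s (Dx P l u)))
      + (\<Sum>s\<in>{1..m}. \<Sum>l\<in>{1..n}. smul P (?cc (tau_op n lam l) (Egl_m s i) * (- (?sI * g))) (dt_dxi_coef \<alpha> I l s u))"
    by (simp add: Dx_dt_coef[OF ok I] V.scale_right_distrib sum.distrib mult_ac sum_subtractf sum_negf)
  have E5: "(\<Sum>l'\<in>{1..n}. \<Sum>c\<in>{1..m}. smul P (?cc (wedge_op c) (Edown n lam l' i) * (- ?sI * g)) (Dt P c (?dx l' u)))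
      = (\<Sum>l'\<in>{1..n}. \<Sum>c\<in>{1..m}. smul P (?cc (wedge_op c) (Edown n lam l' i) * (- ?sI * g)) (?dx l' (Dt P c u)))
      + (\<Sum>l'\<in>{1..n}. \<Sum>c\<in>{1..m}. smul P (?cc (wedge_op c) (Edown n lam l' i) * (- ?sI * g)) (dt_dxi_coef \<alpha> I l' c u))"
    by (simp add: Dt_dxi_coef[OF ok I] V.scale_right_distrib sum.distrib sum_subtractf sum_negf)
  have sign: "z * (- ?sI * g) * (- (- (?sI * g))) = - z" for z
  proof -
    have "z * (- ?sI * g) * (- (- (?sI * g))) = - z * (?sI * ?sI) * (g * g)" by (simp add: algebra_simps)
    then show ?thesis using gg by simp
  qed
  have E6: "(\<Sum>l'\<in>{1..n}. \<Sum>l\<in>{1..n}.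
        smul P (?cc (tau_op n lam l) (Edown n lam l' i) * (- ?sI * g) * (- (- (?sI * g)))) (Dx P l (?dx l' u)))
      = (\<Sum>l'\<in>{1..n}. \<Sum>l\<in>{1..n}. smul P (?cc (tau_op n lam l) (Edown n lam l' i) * ?sI) (?dx l' (Dx P l u)))
      - (\<Sum>l'\<in>{1..n}. \<Sum>l\<in>{1..n}. smul P (?cc (tau_op n lam l) (Edown n lam l' i)) (dxi_dxi_coef \<alpha> I l l' u))"
    unfolding sum_Dx_dxi_coef[OF ok I] sign by (simp add: sum_negf)
  show ?thesis
    unfolding sigma_actWt_pure_expand[OF hu ok I i] E1 E2 E3 E4 E5 E6 actWt_nf_def
      actWt_dt_dt_terms_zero[OF fS] actWt_dxi_dxi_terms_zero[OF I fS mu]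
    using actWt_mixed_terms_zero[OF fS] by (simp add: ac_simps)
qed

lemma actWt_sigma_pure_nf:
  assumes hu: "homog g u" and gg: "g * g = 1" and ok: "admissible \<alpha>" and I: "I \<subseteq> {1..n}"
    and i: "i \<in> {1..m}" and fS: "finite S" and mu: "\<mu> \<in> Sset n lam"
  shows "lin_ext (actWt_pure m n lam P \<alpha> I i) (sigma_pure m n lam P u (S, \<mu>)) x = actWt_nf lam \<alpha> I i g u (S, \<mu>) x"
proof -
  let ?sI = "(-1::complex) ^ card I" and ?cc = "\<lambda>E E'. coord_comp E E' (S, \<mu>) x"
  let ?w = "\<lambda>c. coord (wedge_op c (S, \<mu>)) x" and ?t = "\<lambda>l. coord (tau_op n lam l (S, \<mu>)) x"
  let ?dt = "dt_coef P m \<alpha> I" and ?dx = "dxi_coef P m \<alpha> I"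
  have gg2: "g * (g * z) = z" for z using gg by (simp add: mult.assoc[symmetric])
  have R2: "(\<Sum>c\<in>{1..m}. \<Sum>s\<in>{1..m}. smul P (?cc (Egl_m s i) (wedge_op c)) (?dt s (Dt P c u)))
      = (\<Sum>s\<in>{1..m}. \<Sum>c\<in>{1..m}. smul P (?cc (wedge_op c) (Egl_m s i)) (?dt s (Dt P c u)))
      + (\<Sum>s\<in>{1..m}. smul P (?w s) (?dt s (Dt P i u)))"
    by (rule double_sum_commutator[OF i]) (simp_all add: Egl_m_wedge_commutator[OF fS])
  have R3: "(\<Sum>c\<in>{1..m}. \<Sum>l'\<in>{1..n}. smul P (?cc (Edown n lam l' i) (wedge_op c) * (- ?sI * g)) (?dx l' (Dt P c u)))
      = (\<Sum>l'\<in>{1..n}. \<Sum>c\<in>{1..m}. smul P (?cc (wedge_op c) (Edown n lam l' i) * (- ?sI * g)) (?dx l' (Dt P c u)))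
      + (\<Sum>l\<in>{1..n}. smul P (?t l * (- ?sI * g)) (?dx l (Dt P i u)))"
    by (rule double_sum_commutator[OF i]) (simp_all add: Edown_wedge_commutator[OF fS] distrib_right)
  have R5: "(\<Sum>l\<in>{1..n}. \<Sum>s\<in>{1..m}. smul P (?cc (Egl_m s i) (tau_op n lam l) * - g) (?dt s (Dx P l u)))
      = (\<Sum>s\<in>{1..m}. \<Sum>l\<in>{1..n}. smul P (?cc (tau_op n lam l) (Egl_m s i) * - g) (?dt s (Dx P l u)))"
    by (subst sum.swap) (simp add: tau_Egl_m_commute[OF fS])
  have R6: "(\<Sum>l\<in>{1..n}. \<Sum>l'\<in>{1..n}. smul P (?cc (Edown n lam l' i) (tau_op n lam l) * - g * (- ?sI * - g)) (?dx l' (Dx P l u)))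
      = (\<Sum>l'\<in>{1..n}. \<Sum>l\<in>{1..n}. smul P (?cc (tau_op n lam l) (Edown n lam l' i) * ?sI) (?dx l' (Dx P l u)))"
    by (subst sum.swap) (simp add: Edown_tau_anticommute[OF fS mu] mult_ac gg gg2)
  show ?thesis
    unfolding actWt_sigma_pure_expand[OF hu ok I i] R2 R3 R5 R6 actWt_nf_def by (simp add: ac_simps)
qed

lemma sigma_actWt_pure_homog:
  assumes "homog g u" "g * g = 1" "admissible \<alpha>" "I \<subseteq> {1..n}" "i \<in> {1..m}" "finite S" "\<mu> \<in> Sset n lam"
  shows "lin_ext (sigma_pure m n lam P) (actWt_pure m n lam P \<alpha> I i u (S, \<mu>)) x
       = lin_ext (actWt_pure m n lam P \<alpha> I i) (sigma_pure m n lam P u (S, \<mu>)) x"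
  using sigma_actWt_pure_nf[OF assms] actWt_sigma_pure_nf[OF assms] by simp

(* The coefficient at x of both \<sigma>(\<pi>(t^\<alpha> \<xi>_I \<partial>\<xi>_j)(u \<otimes> b)) and \<pi>(t^\<alpha> \<xi>_I \<partial>\<xi>_j)(\<sigma>(u \<otimes> b)),
   for u homogeneous of parity g. *)
definition actWx_nf :: "(nat \<Rightarrow> complex) \<Rightarrow> (nat \<Rightarrow> int) \<Rightarrow> nat set \<Rightarrow> nat \<Rightarrow> complex \<Rightarrow> 'p \<Rightarrow> bidx \<Rightarrow> bidx \<Rightarrow> 'p"
  where "actWx_nf lam \<alpha> I j g u b x =
      (\<Sum>c\<in>{1..m}. smul P (coord (wedge_op c b) x) (mulop P m \<alpha> I (Dx P j (Dt P c u))))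
    + (\<Sum>c\<in>{1..m}. smul P (coord (wedge_op c b) x) (dt_coef P m \<alpha> I c (Dx P j u)))
    + (\<Sum>l\<in>{1..n}. smul P (coord (tau_op n lam l b) x * - g) (mulop P m \<alpha> I (Dx P j (Dx P l u))))
    + (\<Sum>l\<in>{1..n}. smul P (coord (tau_op n lam l b) x * ((-1) ^ card I * g)) (dxi_coef P m \<alpha> I l (Dx P j u)))
    + (\<Sum>s\<in>{1..m}. \<Sum>c\<in>{1..m}. smul P (coord_comp (wedge_op c) (Eup n lam s j) b x * g) (dt_coef P m \<alpha> I s (Dt P c u)))
    + (\<Sum>s\<in>{1..m}. \<Sum>l\<in>{1..n}. smul P (- coord_comp (tau_op n lam l) (Eup n lam s j) b x) (dt_coef P m \<alpha> I s (Dx P l u)))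
    + (\<Sum>l\<in>{1..n}. \<Sum>c\<in>{1..m}.
         smul P (coord_comp (wedge_op c) (Egl_n n lam l j) b x * - ((-1) ^ card I)) (dxi_coef P m \<alpha> I l (Dt P c u)))
    + (\<Sum>l'\<in>{1..n}. \<Sum>l\<in>{1..n}.
         smul P (coord_comp (tau_op n lam l) (Egl_n n lam l' j) b x * ((-1) ^ card I * g)) (dxi_coef P m \<alpha> I l' (Dx P l u)))"

lemma actWx_dt_dt_terms_zero:
  assumes "finite S"
  shows "(\<Sum>s\<in>{1..m}. \<Sum>c\<in>{1..m}. smul P (coord_comp (wedge_op c) (Eup n lam s j) (S, \<mu>) x * g) (dt_dt_coef \<alpha> I s c u)) = 0"
  by (rule double_sum_antisym_sym_zero) (subst wedge_Eup_antisym[OF assms], simp, rule dt_dt_coef_sym)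

lemma actWx_dxi_dxi_terms_zero:
  assumes "I \<subseteq> {1..n}" "j \<in> {1..n}" "finite S" "\<mu> \<in> Sset n lam"
  shows "(\<Sum>l'\<in>{1..n}. \<Sum>l\<in>{1..n}.
      smul P (coord_comp (tau_op n lam l) (Egl_n n lam l' j) (S, \<mu>) x * g) (dxi_dxi_coef \<alpha> I l l' u)) = 0"
  by (rule double_sum_sym_antisym_zero)
    (simp add: tau_Egl_n_sym[OF assms(3,4) _ _ assms(2)], rule dxi_dxi_coef_antisym[OF assms(1)])

lemma actWx_mixed_terms_zero:
  assumes "g * g = 1" "j \<in> {1..n}" "finite S" "\<mu> \<in> Sset n lam"
  shows "(\<Sum>s\<in>{1..m}. \<Sum>l\<in>{1..n}.
      smul P (coord_comp (tau_op n lam l) (Eup n lam s j) (S, \<mu>) x * g * - ((-1) ^ card I * g)) (dt_dxi_coef \<alpha> I l s u))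
    + (\<Sum>l'\<in>{1..n}. \<Sum>c\<in>{1..m}.
      smul P (coord_comp (wedge_op c) (Egl_n n lam l' j) (S, \<mu>) x * - ((-1) ^ card I)) (dt_dxi_coef \<alpha> I l' c u)) = 0"
proof -
  have gg2: "g * (g * z) = z" for z using assms(1) by (simp add: mult.assoc[symmetric])
  have "(\<Sum>l'\<in>{1..n}. \<Sum>c\<in>{1..m}.
        smul P (coord_comp (wedge_op c) (Egl_n n lam l' j) (S, \<mu>) x * - ((-1) ^ card I)) (dt_dxi_coef \<alpha> I l' c u))
      = (\<Sum>s\<in>{1..m}. \<Sum>l\<in>{1..n}.
        smul P (coord_comp (wedge_op s) (Egl_n n lam l j) (S, \<mu>) x * - ((-1) ^ card I)) (dt_dxi_coef \<alpha> I l s u))"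
    by (rule sum.swap)
  moreover have "l \<in> {1..n} \<Longrightarrow>
      coord_comp (tau_op n lam l) (Eup n lam s j) (S, \<mu>) x = - coord_comp (wedge_op s) (Egl_n n lam l j) (S, \<mu>) x" for s l
    by (rule tau_Eup[OF assms(3,4) _ assms(2)])
  ultimately show ?thesis by (simp add: sum_negf mult_ac assms(1) gg2)
qed

lemma sigma_actWx_pure_nf:
  assumes hu: "homog g u" and gg: "g * g = 1" and ok: "admissible \<alpha>" and I: "I \<subseteq> {1..n}"
    and j: "j \<in> {1..n}" and fS: "finite S" and mu: "\<mu> \<in> Sset n lam"
  shows "lin_ext (sigma_pure m n lam P) (actWx_pure m n lam P \<alpha> I j u (S, \<mu>)) x = actWx_nf lam \<alpha> I j g u (S, \<mu>) x"
proof -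
  let ?sI = "(-1::complex) ^ card I" and ?cc = "\<lambda>E E'. coord_comp E E' (S, \<mu>) x"
  let ?w = "\<lambda>c. coord (wedge_op c (S, \<mu>)) x" and ?t = "\<lambda>l. coord (tau_op n lam l (S, \<mu>)) x"
  let ?A = "mulop P m \<alpha> I" and ?dt = "dt_coef P m \<alpha> I" and ?dx = "dxi_coef P m \<alpha> I"
  have gg2: "g * (g * z) = z" for z using gg by (simp add: mult.assoc[symmetric])
  have E1: "(\<Sum>c\<in>{1..m}. smul P (?w c) (Dt P c (?A (Dx P j u))))
      = (\<Sum>c\<in>{1..m}. smul P (?w c) (?A (Dx P j (Dt P c u)))) + (\<Sum>c\<in>{1..m}. smul P (?w c) (?dt c (Dx P j u)))"
    by (simp add: Dt_mulop[OF ok I] Dt_Dx[OF _ j] V.scale_right_distrib sum.distrib)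
  have "?A (Dx P j (Dx P l u)) = - ?A (Dx P l (Dx P j u))" if "l \<in> {1..n}" for l
    using Dx_Dx[OF j that, of u] lin_minus[OF lin_mulop[OF ok I]] by simp
  then have E2: "(\<Sum>l\<in>{1..n}. smul P (?t l * (- (?sI * - g))) (Dx P l (?A (Dx P j u))))
      = (\<Sum>l\<in>{1..n}. smul P (?t l * - g) (?A (Dx P j (Dx P l u))))
      + (\<Sum>l\<in>{1..n}. smul P (?t l * (- (?sI * - g))) (?dx l (Dx P j u)))"
    by (simp add: Dx_mulop[OF ok I] V.scale_right_distrib sum.distrib mult_ac sum_subtractf sum_negf)
  have E3: "(\<Sum>s\<in>{1..m}. \<Sum>c\<in>{1..m}. smul P (?cc (wedge_op c) (Eup n lam s j) * g) (Dt P c (?dt s u)))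
      = (\<Sum>s\<in>{1..m}. \<Sum>c\<in>{1..m}. smul P (?cc (wedge_op c) (Eup n lam s j) * g) (?dt s (Dt P c u)))
      + (\<Sum>s\<in>{1..m}. \<Sum>c\<in>{1..m}. smul P (?cc (wedge_op c) (Eup n lam s j) * g) (dt_dt_coef \<alpha> I s c u))"
    by (simp add: Dt_dt_coef[OF ok I] V.scale_right_distrib sum.distrib sum_subtractf sum_negf)
  have E4: "(\<Sum>s\<in>{1..m}. \<Sum>l\<in>{1..n}. smul P (?cc (tau_op n lam l) (Eup n lam s j) * g * (- (?sI * g))) (Dx P l (?dt s u)))
      = (\<Sum>s\<in>{1..m}. \<Sum>l\<in>{1..n}. smul P (- ?cc (tau_op n lam l) (Eup n lam s j)) (?dt s (Dx P l u)))
      + (\<Sum>s\<in>{1..m}. \<Sum>l\<in>{1..n}. smul P (?cc (tau_op n lam l) (Eup n lam s j) * g * (- (?sI * g))) (dt_dxi_coef \<alpha> I l s u))"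
    by (simp add: Dx_dt_coef[OF ok I] V.scale_right_distrib sum.distrib mult_ac gg gg2 sum_subtractf sum_negf)
  have E5: "(\<Sum>l'\<in>{1..n}. \<Sum>c\<in>{1..m}. smul P (?cc (wedge_op c) (Egl_n n lam l' j) * - ?sI) (Dt P c (?dx l' u)))
      = (\<Sum>l'\<in>{1..n}. \<Sum>c\<in>{1..m}. smul P (?cc (wedge_op c) (Egl_n n lam l' j) * - ?sI) (?dx l' (Dt P c u)))
      + (\<Sum>l'\<in>{1..n}. \<Sum>c\<in>{1..m}. smul P (?cc (wedge_op c) (Egl_n n lam l' j) * - ?sI) (dt_dxi_coef \<alpha> I l' c u))"
    by (simp add: Dt_dxi_coef[OF ok I] V.scale_right_distrib sum.distrib sum_subtractf sum_negf)
  have sign: "z * - ?sI * (- (- (?sI * g))) = - (z * g)" for z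
  proof -
    have "z * - ?sI * (- (- (?sI * g))) = - (z * g) * (?sI * ?sI)" by (simp add: algebra_simps)
    then show ?thesis by simp
  qed
  have E6: "(\<Sum>l'\<in>{1..n}. \<Sum>l\<in>{1..n}.
        smul P (?cc (tau_op n lam l) (Egl_n n lam l' j) * - ?sI * (- (- (?sI * g)))) (Dx P l (?dx l' u)))
      = (\<Sum>l'\<in>{1..n}. \<Sum>l\<in>{1..n}. smul P (?cc (tau_op n lam l) (Egl_n n lam l' j) * (?sI * g)) (?dx l' (Dx P l u)))
      - (\<Sum>l'\<in>{1..n}. \<Sum>l\<in>{1..n}. smul P (?cc (tau_op n lam l) (Egl_n n lam l' j) * g) (dxi_dxi_coef \<alpha> I l l' u))"
    unfolding sum_Dx_dxi_coef[OF ok I] sign by (simp add: sum_negf mult_ac)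
  show ?thesis
    unfolding sigma_actWx_pure_expand[OF hu ok I j] E1 E2 E3 E4 E5 E6 actWx_nf_def
      actWx_dt_dt_terms_zero[OF fS] actWx_dxi_dxi_terms_zero[OF I j fS mu]
    using actWx_mixed_terms_zero[OF gg j fS mu] by (simp add: ac_simps)
qed

lemma actWx_sigma_pure_nf:
  assumes hu: "homog g u" and gg: "g * g = 1" and ok: "admissible \<alpha>" and I: "I \<subseteq> {1..n}"
    and j: "j \<in> {1..n}" and fS: "finite S" and mu: "\<mu> \<in> Sset n lam"
  shows "lin_ext (actWx_pure m n lam P \<alpha> I j) (sigma_pure m n lam P u (S, \<mu>)) x = actWx_nf lam \<alpha> I j g u (S, \<mu>) x"
proof -
  let ?sI = "(-1::complex) ^ card I" and ?cc = "\<lambda>E E'. coord_comp E E' (S, \<mu>) x"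
  let ?w = "\<lambda>c. coord (wedge_op c (S, \<mu>)) x" and ?t = "\<lambda>l. coord (tau_op n lam l (S, \<mu>)) x"
  let ?dt = "dt_coef P m \<alpha> I" and ?dx = "dxi_coef P m \<alpha> I"
  have R2: "(\<Sum>c\<in>{1..m}. \<Sum>s\<in>{1..m}. smul P (?cc (Eup n lam s j) (wedge_op c) * g) (?dt s (Dt P c u)))
      = (\<Sum>s\<in>{1..m}. \<Sum>c\<in>{1..m}. smul P (?cc (wedge_op c) (Eup n lam s j) * g) (?dt s (Dt P c u)))"
    by (subst sum.swap) (simp add: wedge_Eup_commute[OF fS])
  have R3: "(\<Sum>c\<in>{1..m}. \<Sum>l'\<in>{1..n}. smul P (?cc (Egl_n n lam l' j) (wedge_op c) * - ?sI) (?dx l' (Dt P c u)))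
      = (\<Sum>l'\<in>{1..n}. \<Sum>c\<in>{1..m}. smul P (?cc (wedge_op c) (Egl_n n lam l' j) * - ?sI) (?dx l' (Dt P c u)))"
    by (subst sum.swap) (simp add: wedge_Egl_n_commute[OF fS])
  have R5: "(\<Sum>l\<in>{1..n}. \<Sum>s\<in>{1..m}. smul P (?cc (Eup n lam s j) (tau_op n lam l) * - g * - g) (?dt s (Dx P l u)))
      = (\<Sum>s\<in>{1..m}. \<Sum>l\<in>{1..n}. smul P (- ?cc (tau_op n lam l) (Eup n lam s j)) (?dt s (Dx P l u)))
      + (\<Sum>s\<in>{1..m}. smul P (?w s) (?dt s (Dx P j u)))"
  proof (rule double_sum_commutator[OF j])
    fix l s assume l: "l \<in> {1..n}"
    have "?cc (Eup n lam s j) (tau_op n lam l) * - g * - g = ?cc (Eup n lam s j) (tau_op n lam l)"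
      using gg by (simp add: mult.assoc)
    also have "\<dots> = - ?cc (tau_op n lam l) (Eup n lam s j) + (if l = j then ?w s else 0)"
      using Eup_tau_anticommutator[OF fS mu l j, of s x] by (simp add: algebra_simps eq_diff_eq)
    finally show "?cc (Eup n lam s j) (tau_op n lam l) * - g * - g
        = - ?cc (tau_op n lam l) (Eup n lam s j) + (if l = j then ?w s else 0)" .
  qed simp
  have R6: "(\<Sum>l\<in>{1..n}. \<Sum>l'\<in>{1..n}. smul P (?cc (Egl_n n lam l' j) (tau_op n lam l) * - g * - ?sI) (?dx l' (Dx P l u)))
      = (\<Sum>l'\<in>{1..n}. \<Sum>l\<in>{1..n}. smul P (?cc (tau_op n lam l) (Egl_n n lam l' j) * (?sI * g)) (?dx l' (Dx P l u)))
      + (\<Sum>l\<in>{1..n}. smul P (?t l * (?sI * g)) (?dx l (Dx P j u)))"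
    by (rule double_sum_commutator[OF j]) (simp_all add: Egl_n_tau_commutator[OF fS mu _ _ j] algebra_simps)
  show ?thesis
    unfolding actWx_sigma_pure_expand[OF hu ok I j] R2 R3 R5 R6 actWx_nf_def by (simp add: ac_simps)
qed

lemma sigma_actWx_pure_homog:
  assumes "homog g u" "g * g = 1" "admissible \<alpha>" "I \<subseteq> {1..n}" "j \<in> {1..n}" "finite S" "\<mu> \<in> Sset n lam"
  shows "lin_ext (sigma_pure m n lam P) (actWx_pure m n lam P \<alpha> I j u (S, \<mu>)) x
       = lin_ext (actWx_pure m n lam P \<alpha> I j) (sigma_pure m n lam P u (S, \<mu>)) x"
  using sigma_actWx_pure_nf[OF assms] actWx_sigma_pure_nf[OF assms] by simp


section \<open>The map \<sigma> on F(P, M(\<lambda>))\<close>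

lemma sigmaF_lin_ext: "sigmaF m n lam P = lin_ext (sigma_pure m n lam P)"
  by (simp add: sigmaF_def lin_ext_def fun_eq_iff)
lemma actWt_lin_ext: "actWt m n lam P \<alpha> I i = lin_ext (actWt_pure m n lam P \<alpha> I i)"
  by (simp add: actWt_def lin_ext_def fun_eq_iff)
lemma actWx_lin_ext: "actWx m n lam P \<alpha> I j = lin_ext (actWx_pure m n lam P \<alpha> I j)"
  by (simp add: actWx_def lin_ext_def fun_eq_iff)

lemma admissible_Wexp: "Wexp L m \<alpha> \<Longrightarrow> admissible \<alpha>"
  by (simp add: Wexp_def admissible_def)

lemma BidxE:
  assumes "b \<in> Bidx m n lam"
  obtains S \<mu> where "b = (S, \<mu>)" "finite S" "\<mu> \<in> Sset n lam"
  using assms by (auto simp: Bidx_def intro: finite_subset)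

lemma sigma_actWt_pure:
  assumes "admissible \<alpha>" "I \<subseteq> {1..n}" "i \<in> {1..m}" "b \<in> Bidx m n lam"
  shows "lin_ext (sigma_pure m n lam P) (actWt_pure m n lam P \<alpha> I i u b) x
       = lin_ext (actWt_pure m n lam P \<alpha> I i) (sigma_pure m n lam P u b) x"
proof -
  from assms(4) obtain S \<mu> where b: "b = (S, \<mu>)" "finite S" "\<mu> \<in> Sset n lam" by (rule BidxE)
  note G = coeff_linear_actWt_pure[OF assms(1-3), where lam = lam]
  show ?thesis
    unfolding coeff_linear_evp_odp[OF G, of u] coeff_linear_evp_odp[OF coeff_linear_sigma_pure, where u = u]
      lin_ext_add[OF coeff_linear_sigma_pure fin_supp_actWt_pure fin_supp_actWt_pure]
      lin_ext_add[OF G fin_supp_sigma_pure fin_supp_sigma_pure] b(1)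
    using sigma_actWt_pure_homog[OF homog_evp _ assms(1-3) b(2,3)] sigma_actWt_pure_homog[OF homog_odp _ assms(1-3) b(2,3)]
    by simp
qed

lemma sigma_actWx_pure:
  assumes "admissible \<alpha>" "I \<subseteq> {1..n}" "j \<in> {1..n}" "b \<in> Bidx m n lam"
  shows "lin_ext (sigma_pure m n lam P) (actWx_pure m n lam P \<alpha> I j u b) x
       = lin_ext (actWx_pure m n lam P \<alpha> I j) (sigma_pure m n lam P u b) x"
proof -
  from assms(4) obtain S \<mu> where b: "b = (S, \<mu>)" "finite S" "\<mu> \<in> Sset n lam" by (rule BidxE)
  note G = coeff_linear_actWx_pure[OF assms(1-3), where lam = lam]
  show ?thesis
    unfolding coeff_linear_evp_odp[OF G, of u] coeff_linear_evp_odp[OF coeff_linear_sigma_pure, where u = u]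
      lin_ext_add[OF coeff_linear_sigma_pure fin_supp_actWx_pure fin_supp_actWx_pure]
      lin_ext_add[OF G fin_supp_sigma_pure fin_supp_sigma_pure] b(1)
    using sigma_actWx_pure_homog[OF homog_evp _ assms(1-3) b(2,3)] sigma_actWx_pure_homog[OF homog_odp _ assms(1-3) b(2,3)]
    by simp
qed

lemma Fsp_fin_supp: "w \<in> Fsp m n lam P \<Longrightarrow> fin_supp w"
  by (simp add: Fsp_def fin_supp_def)

lemma sigmaF_actWt:
  assumes w: "w \<in> Fsp m n lam P" and "admissible \<alpha>" "I \<subseteq> {1..n}" "i \<in> {1..m}"
  shows "sigmaF m n lam P (actWt m n lam P \<alpha> I i w) = actWt m n lam P \<alpha> I i (sigmaF m n lam P w)"
  unfolding sigmaF_lin_ext actWt_lin_ext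
proof (rule lin_ext_commute[OF coeff_linear_sigma_pure fin_supp_sigma_pure
      coeff_linear_actWt_pure[OF assms(2-4)] fin_supp_actWt_pure Fsp_fin_supp[OF w]])
  fix b x assume "w b \<noteq> 0"
  then have "b \<in> Bidx m n lam" using w unfolding Fsp_def by blast
  then show "lin_ext (sigma_pure m n lam P) (actWt_pure m n lam P \<alpha> I i (w b) b) x
      = lin_ext (actWt_pure m n lam P \<alpha> I i) (sigma_pure m n lam P (w b) b) x"
    by (rule sigma_actWt_pure[OF assms(2-4)])
qed

lemma sigmaF_actWx:
  assumes w: "w \<in> Fsp m n lam P" and "admissible \<alpha>" "I \<subseteq> {1..n}" "j \<in> {1..n}"
  shows "sigmaF m n lam P (actWx m n lam P \<alpha> I j w) = actWx m n lam P \<alpha> I j (sigmaF m n lam P w)"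
  unfolding sigmaF_lin_ext actWx_lin_ext
proof (rule lin_ext_commute[OF coeff_linear_sigma_pure fin_supp_sigma_pure
      coeff_linear_actWx_pure[OF assms(2-4)] fin_supp_actWx_pure Fsp_fin_supp[OF w]])
  fix b x assume "w b \<noteq> 0"
  then have "b \<in> Bidx m n lam" using w unfolding Fsp_def by blast
  then show "lin_ext (sigma_pure m n lam P) (actWx_pure m n lam P \<alpha> I j (w b) b) x
      = lin_ext (actWx_pure m n lam P \<alpha> I j) (sigma_pure m n lam P (w b) b) x"
    by (rule sigma_actWx_pure[OF assms(2-4)])
qed

lemma coord_wedge_outside:
  assumes "b \<in> Bidx m n lam" "c \<in> {1..m}" "x \<notin> Bidx m n lam"
  shows "coord (wedge_op c b) x = 0"
proof -
  obtain S \<mu> where b: "b = (S, \<mu>)" "S \<subseteq> {1..m}" "\<mu> \<in> Sset n lam" using assms(1) by (auto simp: Bidx_def)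
  have "(insert c S, \<mu>) \<in> Bidx m n lam" using b assms(2) by (auto simp: Bidx_def)
  then show ?thesis using assms(3) b by (auto simp: coord_def wedge_op_nf)
qed

lemma coord_tau_outside:
  assumes "b \<in> Bidx m n lam" "x \<notin> Bidx m n lam"
  shows "coord (tau_op n lam l b) x = 0"
proof -
  obtain S \<mu> where b: "b = (S, \<mu>)" "S \<subseteq> {1..m}" "\<mu> \<in> Sset n lam" using assms(1) by (auto simp: Bidx_def)
  show ?thesis using assms(2) b by (auto simp: coord_def tau_op_nf Bidx_def)
qed

lemma sigma_pure_outside_homog:
  assumes "homog g u" "b \<in> Bidx m n lam" "x \<notin> Bidx m n lam"
  shows "sigma_pure m n lam P u b x = 0"
  using assms by (simp add: sigma_pure_homog coord_wedge_outside coord_tau_outside)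

lemma sigma_pure_outside:
  assumes "b \<in> Bidx m n lam" "x \<notin> Bidx m n lam"
  shows "sigma_pure m n lam P u b x = 0"
  unfolding coeff_linear_evp_odp[OF coeff_linear_sigma_pure, where u = u]
  using sigma_pure_outside_homog[OF homog_evp assms] sigma_pure_outside_homog[OF homog_odp assms] by simp

lemma sigmaF_Fsp:
  assumes w: "w \<in> Fsp m n lam P"
  shows "sigmaF m n lam P w \<in> Fsp m n lam P"
proof -
  have f: "finite {b. w b \<noteq> 0}" using w by (simp add: Fsp_def)
  have B: "\<And>b. b \<in> {b. w b \<noteq> 0} \<Longrightarrow> b \<in> Bidx m n lam" using w unfolding Fsp_def by blast
  have "fin_supp (\<lambda>x. \<Sum>b\<in>{b. w b \<noteq> 0}. sigma_pure m n lam P (w b) b x)"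
    by (rule fin_supp_sum[OF f fin_supp_sigma_pure])
  moreover have "sigmaF m n lam P w x \<noteq> 0 \<Longrightarrow> x \<in> Bidx m n lam" for x
  proof (rule ccontr)
    assume a: "sigmaF m n lam P w x \<noteq> 0" "x \<notin> Bidx m n lam"
    have "sigmaF m n lam P w x = (\<Sum>b\<in>{b. w b \<noteq> 0}. sigma_pure m n lam P (w b) b x)" by (simp add: sigmaF_def)
    also have "\<dots> = 0" by (rule sum.neutral) (use sigma_pure_outside[OF B a(2)] in blast)
    finally show False using a by simp
  qed
  ultimately show ?thesis unfolding Fsp_def fin_supp_def sigmaF_def by auto
qed

lemma sigmaF_add:
  assumes "w \<in> Fsp m n lam P" "w' \<in> Fsp m n lam P"
  shows "sigmaF m n lam P (\<lambda>b. w b + w' b) = (\<lambda>b. sigmaF m n lam P w b + sigmaF m n lam P w' b)"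
  unfolding sigmaF_lin_ext by (rule HOL.ext) (rule lin_ext_add[OF coeff_linear_sigma_pure Fsp_fin_supp[OF assms(1)] Fsp_fin_supp[OF assms(2)]])

lemma sigmaF_scale:
  assumes "w \<in> Fsp m n lam P"
  shows "sigmaF m n lam P (\<lambda>b. smul P c (w b)) = (\<lambda>b. smul P c (sigmaF m n lam P w b))"
  unfolding sigmaF_lin_ext by (rule HOL.ext) (rule lin_ext_scale[OF coeff_linear_sigma_pure Fsp_fin_supp[OF assms]])

lemma coord_wedge_parity:
  "coord (wedge_op c b) x * (-1) ^ parM n lam x = coord (wedge_op c b) x * (-1) ^ parM n lam b"
proof (cases "x = snd (wedge_op c b)")
  case True
  obtain S \<mu> where b: "b = (S, \<mu>)" by (cases b)
  show ?thesis using True by (simp add: b wedge_op_nf parM_def)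
qed (simp add: coord_def)

lemma coord_tau_parity:
  assumes "l \<in> {1..n}"
  shows "coord (tau_op n lam l b) x * (-1) ^ parM n lam x = - (coord (tau_op n lam l b) x * (-1) ^ parM n lam b)"
proof (cases "x = snd (tau_op n lam l b)")
  case True
  obtain S \<mu> where b: "b = (S, \<mu>)" by (cases b)
  show ?thesis using True parM_shift[OF assms, of lam S \<mu> S] by (simp add: b tau_op_nf)
qed (simp add: coord_def)

lemma gam_sigma_pure_homog:
  assumes hu: "homog g u"
  shows "smul P ((-1) ^ parM n lam b) (sigma_pure m n lam P (gam P u) b x) = smul P ((-1) ^ parM n lam x) (gam P (sigma_pure m n lam P u b x))"
proof -
  let ?pb = "(-1::complex) ^ parM n lam b" and ?px = "(-1::complex) ^ parM n lam x"
  have gu: "gam P u = smul P g u" using hu by (simp add: homog_def)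
  have L: "smul P ?pb (sigma_pure m n lam P (gam P u) b x) =
     (\<Sum>c\<in>{1..m}. smul P (?pb * g * coord (wedge_op c b) x) (Dt P c u))
   + (\<Sum>l\<in>{1..n}. smul P (?pb * g * (coord (tau_op n lam l b) x * - g)) (Dx P l u))"
    unfolding gu coeff_linear_scale[OF coeff_linear_sigma_pure] sigma_pure_homog[OF hu]
    by (simp add: V.scale_right_distrib V.scale_sum_right mult.assoc)
  have gd: "gam P (Dt P c u) = smul P g (Dt P c u)" if "c \<in> {1..m}" for c
    using homog_Dt[OF that hu] by (simp add: homog_def)
  have gx: "gam P (Dx P l u) = smul P (- g) (Dx P l u)" if "l \<in> {1..n}" for l
    using homog_Dx[OF that hu] by (simp add: homog_def)
  have R: "smul P ?px (gam P (sigma_pure m n lam P u b x)) =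
     (\<Sum>c\<in>{1..m}. smul P (?px * (coord (wedge_op c b) x * g)) (Dt P c u))
   + (\<Sum>l\<in>{1..n}. smul P (?px * (coord (tau_op n lam l b) x * - g * - g)) (Dx P l u))"
    unfolding sigma_pure_homog[OF hu]
    by (simp add: lin_add[OF lin_gam] lin_sum[OF lin_gam] lin_scale[OF lin_gam] lin_minus[OF lin_gam] gd gx
        V.scale_right_distrib V.scale_sum_right mult.assoc)
  have c1: "?pb * g * coord (wedge_op c b) x = ?px * (coord (wedge_op c b) x * g)" for c
    using coord_wedge_parity[where c = c and b = b and x = x and lam = lam] by (metis mult.assoc mult.commute)
  have c2: "?pb * g * (coord (tau_op n lam l b) x * - g) = ?px * (coord (tau_op n lam l b) x * - g * - g)"
    if "l \<in> {1..n}" for l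
    using coord_tau_parity[OF that, where b = b and x = x and lam = lam] by (simp add: mult_ac)
  have A: "(\<Sum>c\<in>{1..m}. smul P (?pb * g * coord (wedge_op c b) x) (Dt P c u)) = (\<Sum>c\<in>{1..m}. smul P (?px * (coord (wedge_op c b) x * g)) (Dt P c u))"
    by (rule sum.cong[OF refl]) (simp only: c1)
  have B: "(\<Sum>l\<in>{1..n}. smul P (?pb * g * (coord (tau_op n lam l b) x * - g)) (Dx P l u)) = (\<Sum>l\<in>{1..n}. smul P (?px * (coord (tau_op n lam l b) x * - g * - g)) (Dx P l u))"
    by (rule sum.cong[OF refl]) (simp only: c2)
  show ?thesis unfolding L R A B ..
qed

lemma gam_sigma_pure:
  "smul P ((-1) ^ parM n lam b) (sigma_pure m n lam P (gam P u) b x)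
   = smul P ((-1) ^ parM n lam x) (gam P (sigma_pure m n lam P u b x))"
proof -
  have gam_split: "sigma_pure m n lam P (gam P u) b x
      = sigma_pure m n lam P (gam P (evp P u)) b x + sigma_pure m n lam P (gam P (odp P u)) b x"
    using coeff_linear_add[OF coeff_linear_sigma_pure, where u = "gam P (evp P u)" and v = "gam P (odp P u)"]
    by (simp add: evp_odp flip: lin_add[OF lin_gam])
  show ?thesis
    unfolding gam_split coeff_linear_evp_odp[OF coeff_linear_sigma_pure, where u = u]
      V.scale_right_distrib lin_add[OF lin_gam]
    using gam_sigma_pure_homog[OF homog_evp, where b = b and x = x and lam = lam]
      gam_sigma_pure_homog[OF homog_odp, where b = b and x = x and lam = lam] by simp
qed

lemma sigmaF_GammaF:
  assumes w: "w \<in> Fsp m n lam P"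
  shows "sigmaF m n lam P (GammaF n lam P w) = GammaF n lam P (sigmaF m n lam P w)"
proof (rule HOL.ext)
  fix x
  have f: "finite {b. w b \<noteq> 0}" using w by (simp add: Fsp_def)
  have "sigmaF m n lam P (GammaF n lam P w) x = (\<Sum>b\<in>{b. w b \<noteq> 0}. sigma_pure m n lam P (GammaF n lam P w b) b x)"
    unfolding sigmaF_lin_ext
    by (rule lin_ext_superset[OF coeff_linear_sigma_pure f]) (auto simp: GammaF_def lin_zero[OF lin_gam])
  also have "\<dots> = (\<Sum>b\<in>{b. w b \<noteq> 0}. smul P ((-1) ^ parM n lam b) (sigma_pure m n lam P (gam P (w b)) b x))"
    by (simp add: GammaF_def coeff_linear_scale[OF coeff_linear_sigma_pure])
  also have "\<dots> = (\<Sum>b\<in>{b. w b \<noteq> 0}. smul P ((-1) ^ parM n lam x) (gam P (sigma_pure m n lam P (w b) b x)))"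
    by (simp add: gam_sigma_pure)
  also have "\<dots> = GammaF n lam P (sigmaF m n lam P w) x"
    by (simp add: GammaF_def sigmaF_def lin_sum[OF lin_gam] V.scale_sum_right)
  finally show "sigmaF m n lam P (GammaF n lam P w) x = GammaF n lam P (sigmaF m n lam P w) x" .
qed

end

theorem lemma4p3:
  fixes L :: bool and m n :: nat and P :: "('p::ab_group_add) Kmod"
    and lam :: "nat \<Rightarrow> complex"
  assumes "m + n > 0"
    and "simple_Kmod L m n P"
  shows "(\<forall>w\<in>Fsp m n lam P. sigmaF m n lam P w \<in> Fsp m n lam P)
       \<and> (\<forall>w\<in>Fsp m n lam P. \<forall>w'\<in>Fsp m n lam P.
            sigmaF m n lam P (\<lambda>b. w b + w' b) = (\<lambda>b. sigmaF m n lam P w b + sigmaF m n lam P w' b))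
       \<and> (\<forall>w\<in>Fsp m n lam P. \<forall>c.
            sigmaF m n lam P (\<lambda>b. smul P c (w b)) = (\<lambda>b. smul P c (sigmaF m n lam P w b)))
       \<and> (\<forall>w\<in>Fsp m n lam P.
            sigmaF m n lam P (GammaF n lam P w) = GammaF n lam P (sigmaF m n lam P w))
       \<and> (\<forall>w\<in>Fsp m n lam P. \<forall>\<alpha> I i. Wexp L m \<alpha> \<and> I \<subseteq> {1..n} \<and> i \<in> {1..m} \<longrightarrow>
            sigmaF m n lam P (actWt m n lam P \<alpha> I i w) = actWt m n lam P \<alpha> I i (sigmaF m n lam P w))
       \<and> (\<forall>w\<in>Fsp m n lam P. \<forall>\<alpha> I j. Wexp L m \<alpha> \<and> I \<subseteq> {1..n} \<and> j \<in> {1..n} \<longrightarrow>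
            sigmaF m n lam P (actWx m n lam P \<alpha> I j w) = actWx m n lam P \<alpha> I j (sigmaF m n lam P w))"
proof -
  interpret K_module L m n P
    using assms(2) by unfold_locales (simp add: simple_Kmod_def)
  show ?thesis
    by (auto simp: sigmaF_Fsp sigmaF_add sigmaF_scale sigmaF_GammaF sigmaF_actWt sigmaF_actWx admissible_Wexp)
qed

end
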